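(* Let $(\mathcal{L},\mathcal{G})$ be a flag built lattice and $F\in\mathcal{L}\setminus\{\hat0,\hat1\}$. Then the restriction $(\mathcal{L}^F,\mathcal{G}^F)$ and the contraction $(\mathcal{L}_F,\mathcal{G}_F)$ are flag built lattices.
   Context: $\mathcal{L}$ is a finite geometric lattice. A building set is $\mathcal{G}\subseteq\mathcal{L}\setminus\{\hat0\}$ such that for every $F\neq\hat0$ the join map $\prod_{G\in\max\mathcal{G}_{\leqslant F}}[\hat0,G]\to[\hat0,F]$ is a poset isomorphism ($\max\mathcal{G}_{\leqslant F}$ = maximal elements of $\{G\in\mathcal{G}:G\leqslant F\}$); $(\mathcal{L},\mathcal{G})$ is a built lattice. $\mathcal{S}\subseteq\mathcal{G}$ is nested if for every antichain $A\subseteq\mathcal{S}$ and every $\{S_1,\dots,S_k\}\subseteq A$, $k\geqslant2$, $S_1\vee\dots\vee S_k\notin\mathcal{G}$. $\mathbf{N}(\mathcal{L},\mathcal{G})$ is the simplicial complex of nested sets contained in $\mathcal{G}\setminus\max\mathcal{G}$; $(\mathcal{L},\mathcal{G})$ is flag if $\mathbf{N}(\mathcal{L},\mathcal{G})$ is a flag complex (all minimal non-faces have size $2$). Restriction: $\mathcal{L}^F=[\hat0,F]$, $\mathcal{G}^F=\mathcal{G}\cap[\hat0,F]$. Contraction: $\mathcal{L}_F=[F,\hat1]$, $\mathcal{G}_F=\{F\vee G:G\in\mathcal{G}\}\setminus\{F\}$ (with $F$ as bottom element of $\mathcal{L}_F$). *)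

theory Defs
  imports Main "HOL-Library.FuncSet"
begin

text \<open>Finite posets/lattices are given by a carrier set L and an order relation le,
so that intervals of a lattice are again lattices on the same element type.\<close>

definition is_lub :: "'a set \<Rightarrow> ('a \<Rightarrow> 'a \<Rightarrow> bool) \<Rightarrow> 'a set \<Rightarrow> 'a \<Rightarrow> bool" where
  "is_lub L le S z \<longleftrightarrow> z \<in> L \<and> (\<forall>s\<in>S. le s z) \<and> (\<forall>w\<in>L. (\<forall>s\<in>S. le s w) \<longrightarrow> le z w)"

definition is_glb :: "'a set \<Rightarrow> ('a \<Rightarrow> 'a \<Rightarrow> bool) \<Rightarrow> 'a set \<Rightarrow> 'a \<Rightarrow> bool" where
  "is_glb L le S z \<longleftrightarrow> z \<in> L \<and> (\<forall>s\<in>S. le z s) \<and> (\<forall>w\<in>L. (\<forall>s\<in>S. le w s) \<longrightarrow> le w z)"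

definition lub :: "'a set \<Rightarrow> ('a \<Rightarrow> 'a \<Rightarrow> bool) \<Rightarrow> 'a set \<Rightarrow> 'a" where
  "lub L le S = (THE z. is_lub L le S z)"

definition glb :: "'a set \<Rightarrow> ('a \<Rightarrow> 'a \<Rightarrow> bool) \<Rightarrow> 'a set \<Rightarrow> 'a" where
  "glb L le S = (THE z. is_glb L le S z)"

definition ljoin :: "'a set \<Rightarrow> ('a \<Rightarrow> 'a \<Rightarrow> bool) \<Rightarrow> 'a \<Rightarrow> 'a \<Rightarrow> 'a" where
  "ljoin L le x y = lub L le {x, y}"

definition lmeet :: "'a set \<Rightarrow> ('a \<Rightarrow> 'a \<Rightarrow> bool) \<Rightarrow> 'a \<Rightarrow> 'a \<Rightarrow> 'a" where
  "lmeet L le x y = glb L le {x, y}"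

definition lbot :: "'a set \<Rightarrow> ('a \<Rightarrow> 'a \<Rightarrow> bool) \<Rightarrow> 'a" where
  "lbot L le = lub L le {}"

definition ltop :: "'a set \<Rightarrow> ('a \<Rightarrow> 'a \<Rightarrow> bool) \<Rightarrow> 'a" where
  "ltop L le = lub L le L"

definition interval :: "'a set \<Rightarrow> ('a \<Rightarrow> 'a \<Rightarrow> bool) \<Rightarrow> 'a \<Rightarrow> 'a \<Rightarrow> 'a set" where
  "interval L le a b = {x \<in> L. le a x \<and> le x b}"

definition partial_order_on' :: "'a set \<Rightarrow> ('a \<Rightarrow> 'a \<Rightarrow> bool) \<Rightarrow> bool" where
  "partial_order_on' L le \<longleftrightarrow>
     (\<forall>x\<in>L. le x x) \<and>
     (\<forall>x\<in>L. \<forall>y\<in>L. le x y \<and> le y x \<longrightarrow> x = y) \<and>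
     (\<forall>x\<in>L. \<forall>y\<in>L. \<forall>z\<in>L. le x y \<and> le y z \<longrightarrow> le x z)"

definition lattice_on :: "'a set \<Rightarrow> ('a \<Rightarrow> 'a \<Rightarrow> bool) \<Rightarrow> bool" where
  "lattice_on L le \<longleftrightarrow> partial_order_on' L le \<and>
     (\<forall>x\<in>L. \<forall>y\<in>L. (\<exists>z. is_lub L le {x, y} z) \<and> (\<exists>z. is_glb L le {x, y} z))"

definition covers :: "'a set \<Rightarrow> ('a \<Rightarrow> 'a \<Rightarrow> bool) \<Rightarrow> 'a \<Rightarrow> 'a \<Rightarrow> bool" where
  "covers L le x y \<longleftrightarrow> x \<in> L \<and> y \<in> L \<and> le x y \<and> x \<noteq> y \<and>
     (\<forall>z\<in>L. le x z \<and> le z y \<longrightarrow> z = x \<or> z = y)"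

definition atoms :: "'a set \<Rightarrow> ('a \<Rightarrow> 'a \<Rightarrow> bool) \<Rightarrow> 'a set" where
  "atoms L le = {a \<in> L. covers L le (lbot L le) a}"

text \<open>Finite geometric lattice: finite, atomistic, (upper) semimodular lattice.\<close>
definition geometric_lattice :: "'a set \<Rightarrow> ('a \<Rightarrow> 'a \<Rightarrow> bool) \<Rightarrow> bool" where
  "geometric_lattice L le \<longleftrightarrow> finite L \<and> L \<noteq> {} \<and> lattice_on L le \<and>
     (\<forall>x\<in>L. x = lub L le {a \<in> atoms L le. le a x}) \<and>
     (\<forall>x\<in>L. \<forall>y\<in>L. covers L le (lmeet L le x y) x \<and> covers L le (lmeet L le x y) y
        \<longrightarrow> covers L le x (ljoin L le x y) \<and> covers L le y (ljoin L le x y))"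

definition maxs :: "('a \<Rightarrow> 'a \<Rightarrow> bool) \<Rightarrow> 'a set \<Rightarrow> 'a set" where
  "maxs le S = {x \<in> S. \<forall>y\<in>S. le x y \<longrightarrow> y = x}"

definition building_set :: "'a set \<Rightarrow> ('a \<Rightarrow> 'a \<Rightarrow> bool) \<Rightarrow> 'a set \<Rightarrow> bool" where
  "building_set L le \<G> \<longleftrightarrow> \<G> \<subseteq> L - {lbot L le} \<and>
     (\<forall>F\<in>L. F \<noteq> lbot L le \<longrightarrow>
       (let M = maxs le {G \<in> \<G>. le G F};
            P = (\<Pi>\<^sub>E G\<in>M. interval L le (lbot L le) G);
            j = (\<lambda>x. lub L le (x ` M))
        in bij_betw j P (interval L le (lbot L le) F) \<and>
           (\<forall>x\<in>P. \<forall>y\<in>P. (\<forall>G\<in>M. le (x G) (y G)) \<longleftrightarrow> le (j x) (j y))))"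

definition built_lattice :: "'a set \<Rightarrow> ('a \<Rightarrow> 'a \<Rightarrow> bool) \<Rightarrow> 'a set \<Rightarrow> bool" where
  "built_lattice L le \<G> \<longleftrightarrow> geometric_lattice L le \<and> building_set L le \<G>"

definition antichain_on :: "('a \<Rightarrow> 'a \<Rightarrow> bool) \<Rightarrow> 'a set \<Rightarrow> bool" where
  "antichain_on le A \<longleftrightarrow> (\<forall>x\<in>A. \<forall>y\<in>A. le x y \<longrightarrow> x = y)"

definition nested :: "'a set \<Rightarrow> ('a \<Rightarrow> 'a \<Rightarrow> bool) \<Rightarrow> 'a set \<Rightarrow> 'a set \<Rightarrow> bool" where
  "nested L le \<G> S \<longleftrightarrow> S \<subseteq> \<G> \<and>
     (\<forall>A \<subseteq> S. antichain_on le A \<longrightarrow>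
        (\<forall>T \<subseteq> A. finite T \<and> card T \<ge> 2 \<longrightarrow> lub L le T \<notin> \<G>))"

definition nested_complex :: "'a set \<Rightarrow> ('a \<Rightarrow> 'a \<Rightarrow> bool) \<Rightarrow> 'a set \<Rightarrow> 'a set set" where
  "nested_complex L le \<G> = {S. S \<subseteq> \<G> - maxs le \<G> \<and> nested L le \<G> S}"

definition flag_built :: "'a set \<Rightarrow> ('a \<Rightarrow> 'a \<Rightarrow> bool) \<Rightarrow> 'a set \<Rightarrow> bool" where
  "flag_built L le \<G> \<longleftrightarrow>
     (\<forall>N. N \<subseteq> \<G> - maxs le \<G> \<and> N \<notin> nested_complex L le \<G> \<and>
          (\<forall>N'. N' \<subset> N \<longrightarrow> N' \<in> nested_complex L le \<G>) \<longrightarrow> card N = 2)"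

definition restr_L :: "'a set \<Rightarrow> ('a \<Rightarrow> 'a \<Rightarrow> bool) \<Rightarrow> 'a \<Rightarrow> 'a set" where
  "restr_L L le F = {x \<in> L. le x F}"

definition restr_G :: "'a set \<Rightarrow> ('a \<Rightarrow> 'a \<Rightarrow> bool) \<Rightarrow> 'a \<Rightarrow> 'a set" where
  "restr_G \<G> le F = {G \<in> \<G>. le G F}"

definition contr_L :: "'a set \<Rightarrow> ('a \<Rightarrow> 'a \<Rightarrow> bool) \<Rightarrow> 'a \<Rightarrow> 'a set" where
  "contr_L L le F = {x \<in> L. le F x}"

definition contr_G :: "'a set \<Rightarrow> ('a \<Rightarrow> 'a \<Rightarrow> bool) \<Rightarrow> 'a set \<Rightarrow> 'a \<Rightarrow> 'a set" where
  "contr_G L le \<G> F = (\<lambda>G. ljoin L le F G) ` \<G> - {F}"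

end

theory Submission
  imports Defs
begin

text \<open>Restriction to \<open>[0, F]\<close> changes nothing below \<open>F\<close>: joins, atoms, coverings and the
  maximal building elements below any \<open>H \<le> F\<close> are those of \<open>L\<close>, and nestedness of subsets of
  \<open>\<G>\<^sup>F\<close> is the same in both lattices.

  For the contraction \<open>[F, 1]\<close>, semimodularity shows that its atoms are the joins \<open>F \<squnion> a\<close> of
  atoms \<open>a \<notin> [0, F]\<close>, which makes it geometric. Below \<open>H \<ge> F\<close> the maximal elements of \<open>\<G>\<^sub>F\<close>
  are the \<open>F \<squnion> G\<close> with \<open>G\<close> maximal in \<open>\<G>\<close> below \<open>H\<close> and \<open>G \<notin> [0, F]\<close>, and the join map
  is an isomorphism because the meet map \<open>w \<mapsto> (w \<sqinter> K)\<^sub>K\<close> inverts it. Both facts rest on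
  two consequences of the building axiom for distinct maximal \<open>G, G'\<close> below \<open>H\<close>:
  \<open>(\<Squnion>S) \<sqinter> G = \<Squnion>{s \<sqinter> G | s \<in> S}\<close> for \<open>S \<le> H\<close>, and \<open>(F \<squnion> G) \<sqinter> G' \<le> F\<close>.

  Finally, a minimal non-face \<open>N\<close> of the contraction with \<open>|N| \<ge> 3\<close> lifts to \<open>L\<close>: write
  \<open>K = F \<squnion> G\<^sub>K\<close> for \<open>K \<in> N\<close> and \<open>\<Squnion>N = F \<squnion> G\<^sub>0\<close> with \<open>G\<^sub>K, G\<^sub>0\<close> maximal building
  elements. Adding to the \<open>G\<^sub>K\<close> the maximal building elements below \<open>F \<sqinter> G\<^sub>0\<close> that lie below
  no \<open>G\<^sub>K\<close> gives an antichain with join \<open>G\<^sub>0 \<in> \<G>\<close> in which no two elements join into \<open>\<G>\<close>,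
  contradicting flagness of \<open>(L, \<G>)\<close>.\<close>

section \<open>Finite lattices\<close>

lemma partial_order_on'_converse:
  "partial_order_on' L le \<Longrightarrow> partial_order_on' L (\<lambda>x y. le y x)"
  unfolding partial_order_on'_def by blast

lemma finite_has_maximal_wrt:
  assumes po: "partial_order_on' L le" and S: "finite S" "S \<subseteq> L" and x: "x \<in> S"
  shows "\<exists>m\<in>S. le x m \<and> (\<forall>z\<in>S. le m z \<longrightarrow> z = m)"
  using x
proof (induction "card {z\<in>S. le x z}" arbitrary: x rule: less_induct)
  case less
  have refl: "le x x" and antisym: "\<And>z. z \<in> S \<Longrightarrow> le x z \<Longrightarrow> le z x \<Longrightarrow> z = x"
    and trans: "\<And>y z. y \<in> S \<Longrightarrow> z \<in> S \<Longrightarrow> le x y \<Longrightarrow> le y z \<Longrightarrow> le x z"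
    using po less.prems S unfolding partial_order_on'_def by blast+
  show ?case
  proof (cases "\<forall>z\<in>S. le x z \<longrightarrow> z = x")
    case True
    then show ?thesis using less.prems refl by blast
  next
    case False
    then obtain z where z: "z \<in> S" "le x z" "z \<noteq> x" by blast
    have "{w\<in>S. le z w} \<subset> {w\<in>S. le x w}"
      using z less.prems refl antisym trans by blast
    then have "card {w\<in>S. le z w} < card {w\<in>S. le x w}"
      using S by (intro psubset_card_mono) auto
    then obtain m where "m \<in> S" "le z m" "\<forall>w\<in>S. le m w \<longrightarrow> w = m"
      using less.hyps z(1) by blast
    then show ?thesis using z trans by blast
  qed
qed

definition convex_in :: "'a set \<Rightarrow> ('a \<Rightarrow> 'a \<Rightarrow> bool) \<Rightarrow> 'a set \<Rightarrow> bool" where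
  "convex_in L le L' \<longleftrightarrow> (\<forall>x\<in>L'. \<forall>y\<in>L'. \<forall>z\<in>L. le x z \<and> le z y \<longrightarrow> z \<in> L')"

lemma covers_convex:
  "L' \<subseteq> L \<Longrightarrow> convex_in L le L' \<Longrightarrow> x \<in> L' \<Longrightarrow> y \<in> L' \<Longrightarrow> covers L' le x y \<longleftrightarrow> covers L le x y"
  unfolding covers_def convex_in_def by blast

locale finite_lattice =
  fixes L :: "'a set" and le :: "'a \<Rightarrow> 'a \<Rightarrow> bool"
  assumes finite_L: "finite L" and L_nonempty: "L \<noteq> {}" and lattice_on_L: "lattice_on L le"
begin

abbreviation bottom :: 'a where
  "bottom \<equiv> lbot L le"

lemma partial_order: "partial_order_on' L le"
  using lattice_on_L by (simp add: lattice_on_def)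

lemma refl_le: "x \<in> L \<Longrightarrow> le x x"
  using partial_order unfolding partial_order_on'_def by blast

lemma antisym_le: "x \<in> L \<Longrightarrow> y \<in> L \<Longrightarrow> le x y \<Longrightarrow> le y x \<Longrightarrow> x = y"
  using partial_order unfolding partial_order_on'_def by blast

lemma trans_le: "x \<in> L \<Longrightarrow> y \<in> L \<Longrightarrow> z \<in> L \<Longrightarrow> le x y \<Longrightarrow> le y z \<Longrightarrow> le x z"
  using partial_order unfolding partial_order_on'_def by blast

lemma ex_maximal: "S \<subseteq> L \<Longrightarrow> x \<in> S \<Longrightarrow> \<exists>m\<in>S. le x m \<and> (\<forall>z\<in>S. le m z \<longrightarrow> z = m)"
  using finite_has_maximal_wrt[OF partial_order] finite_subset[OF _ finite_L] by blast

lemma ex_minimal: "S \<subseteq> L \<Longrightarrow> x \<in> S \<Longrightarrow> \<exists>m\<in>S. le m x \<and> (\<forall>z\<in>S. le z m \<longrightarrow> z = m)"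
  using finite_has_maximal_wrt[OF partial_order_on'_converse[OF partial_order]]
    finite_subset[OF _ finite_L] by blast

lemma lub_eqI: "L' \<subseteq> L \<Longrightarrow> is_lub L' le S z \<Longrightarrow> lub L' le S = z"
  unfolding lub_def by (rule the_equality) (auto simp: is_lub_def intro: antisym_le)

lemma glb_eqI: "L' \<subseteq> L \<Longrightarrow> is_glb L' le S z \<Longrightarrow> glb L' le S = z"
  unfolding glb_def by (rule the_equality) (auto simp: is_glb_def intro: antisym_le)

lemma is_glb_meet: "x \<in> L \<Longrightarrow> y \<in> L \<Longrightarrow> is_glb L le {x, y} (lmeet L le x y)"
  using lattice_on_L glb_eqI[OF subset_refl] unfolding lattice_on_def lmeet_def by metis

lemma ex_is_lub_nonempty: "finite S \<Longrightarrow> S \<noteq> {} \<Longrightarrow> S \<subseteq> L \<Longrightarrow> \<exists>z. is_lub L le S z"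
proof (induction S rule: finite_ne_induct)
  case (singleton x)
  then show ?case using refl_le by (auto simp: is_lub_def)
next
  case (insert x S)
  then obtain z where z: "is_lub L le S z" by auto
  then have "z \<in> L" by (simp add: is_lub_def)
  then obtain w where w: "is_lub L le {x, z} w"
    using insert.prems lattice_on_L unfolding lattice_on_def by blast
  have "is_lub L le (insert x S) w"
    using z w insert.prems trans_le[of _ z w] unfolding is_lub_def by auto
  then show ?case by blast
qed

lemma ex_is_lub_empty: "\<exists>z. is_lub L le {} z"
proof -
  obtain m where m: "m \<in> L" "\<forall>z\<in>L. le z m \<longrightarrow> z = m"
    using ex_minimal[OF subset_refl] L_nonempty by blast
  have "le m y" if "y \<in> L" for y
  proof -
    have "is_glb L le {m, y} (lmeet L le m y)" using is_glb_meet m(1) that .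
    then show ?thesis using m unfolding is_glb_def by auto
  qed
  then show ?thesis using m(1) unfolding is_lub_def by blast
qed

lemma is_lub_lub: "S \<subseteq> L \<Longrightarrow> is_lub L le S (lub L le S)"
  using ex_is_lub_empty ex_is_lub_nonempty[OF finite_subset[OF _ finite_L]]
    lub_eqI[OF subset_refl] by (cases "S = {}") metis+

lemma lub_closed: "S \<subseteq> L \<Longrightarrow> lub L le S \<in> L"
  using is_lub_lub unfolding is_lub_def by blast

lemma lub_upper: "S \<subseteq> L \<Longrightarrow> s \<in> S \<Longrightarrow> le s (lub L le S)"
  using is_lub_lub unfolding is_lub_def by blast

lemma lub_least: "S \<subseteq> L \<Longrightarrow> w \<in> L \<Longrightarrow> (\<And>s. s \<in> S \<Longrightarrow> le s w) \<Longrightarrow> le (lub L le S) w"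
  using is_lub_lub unfolding is_lub_def by blast

lemma lub_UN:
  assumes A: "\<And>i. i \<in> I \<Longrightarrow> A i \<subseteq> L"
  shows "lub L le ((\<lambda>i. lub L le (A i)) ` I) = lub L le (\<Union>i\<in>I. A i)"
proof -
  have UN: "(\<Union>i\<in>I. A i) \<subseteq> L" using A by blast
  have lubs: "(\<lambda>i. lub L le (A i)) ` I \<subseteq> L" using lub_closed[OF A] by blast
  have le_UN: "le (lub L le (A i)) (lub L le (\<Union>i\<in>I. A i))" if i: "i \<in> I" for i
  proof (rule lub_least[OF A[OF i] lub_closed[OF UN]])
    fix a assume "a \<in> A i"
    then show "le a (lub L le (\<Union>i\<in>I. A i))" using lub_upper[OF UN] i by blast
  qed
  have le_lubs: "le a (lub L le ((\<lambda>i. lub L le (A i)) ` I))" if a: "a \<in> (\<Union>i\<in>I. A i)" for a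
  proof -
    obtain i where i: "i \<in> I" "a \<in> A i" using a by blast
    have "le (lub L le (A i)) (lub L le ((\<lambda>i. lub L le (A i)) ` I))"
      using lub_upper[OF lubs] i(1) by blast
    then show ?thesis
      using trans_le[OF _ lub_closed[OF A[OF i(1)]] lub_closed[OF lubs] lub_upper[OF A[OF i(1)] i(2)]]
        A[OF i(1)] i(2) by blast
  qed
  show ?thesis
  proof (rule antisym_le[OF lub_closed[OF lubs] lub_closed[OF UN]])
    show "le (lub L le ((\<lambda>i. lub L le (A i)) ` I)) (lub L le (\<Union>i\<in>I. A i))"
      using lub_least[OF lubs lub_closed[OF UN]] le_UN by blast
    show "le (lub L le (\<Union>i\<in>I. A i)) (lub L le ((\<lambda>i. lub L le (A i)) ` I))"
      using lub_least[OF UN lub_closed[OF lubs]] le_lubs by blast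
  qed
qed

lemma meet_closed: "x \<in> L \<Longrightarrow> y \<in> L \<Longrightarrow> lmeet L le x y \<in> L"
  using is_glb_meet unfolding is_glb_def by blast

lemma meet_lower1: "x \<in> L \<Longrightarrow> y \<in> L \<Longrightarrow> le (lmeet L le x y) x"
  using is_glb_meet unfolding is_glb_def by blast

lemma meet_lower2: "x \<in> L \<Longrightarrow> y \<in> L \<Longrightarrow> le (lmeet L le x y) y"
  using is_glb_meet unfolding is_glb_def by blast

lemma meet_greatest:
  "x \<in> L \<Longrightarrow> y \<in> L \<Longrightarrow> w \<in> L \<Longrightarrow> le w x \<Longrightarrow> le w y \<Longrightarrow> le w (lmeet L le x y)"
  using is_glb_meet unfolding is_glb_def by blast

lemma join_closed: "x \<in> L \<Longrightarrow> y \<in> L \<Longrightarrow> ljoin L le x y \<in> L"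
  unfolding ljoin_def by (rule lub_closed) auto

lemma join_upper1: "x \<in> L \<Longrightarrow> y \<in> L \<Longrightarrow> le x (ljoin L le x y)"
  unfolding ljoin_def by (rule lub_upper) auto

lemma join_upper2: "x \<in> L \<Longrightarrow> y \<in> L \<Longrightarrow> le y (ljoin L le x y)"
  unfolding ljoin_def by (rule lub_upper) auto

lemma join_least:
  "x \<in> L \<Longrightarrow> y \<in> L \<Longrightarrow> w \<in> L \<Longrightarrow> le x w \<Longrightarrow> le y w \<Longrightarrow> le (ljoin L le x y) w"
  unfolding ljoin_def by (rule lub_least) auto

lemma bot_closed: "bottom \<in> L"
  unfolding lbot_def by (rule lub_closed) auto

lemma bot_least: "x \<in> L \<Longrightarrow> le bottom x"
  unfolding lbot_def by (rule lub_least) auto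

lemma meet_absorb1: "x \<in> L \<Longrightarrow> y \<in> L \<Longrightarrow> le x y \<Longrightarrow> lmeet L le x y = x"
  by (rule antisym_le) (auto intro: meet_closed meet_lower1 meet_greatest refl_le)

lemma meet_absorb2: "x \<in> L \<Longrightarrow> y \<in> L \<Longrightarrow> le y x \<Longrightarrow> lmeet L le x y = y"
  by (rule antisym_le) (auto intro: meet_closed meet_lower2 meet_greatest refl_le)

lemma join_absorb1: "x \<in> L \<Longrightarrow> y \<in> L \<Longrightarrow> le y x \<Longrightarrow> ljoin L le x y = x"
  by (rule antisym_le) (auto intro: join_closed join_upper1 join_least refl_le)

lemma meet_mono:
  assumes "x \<in> L" "y \<in> L" "z \<in> L" "le x y"
  shows "le (lmeet L le x z) (lmeet L le y z)"
  using assms meet_greatest meet_closed meet_lower1 meet_lower2 trans_le by metis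

lemma join_mono:
  assumes "z \<in> L" "x \<in> L" "y \<in> L" "le x y"
  shows "le (ljoin L le z x) (ljoin L le z y)"
  using assms join_least join_closed join_upper1 join_upper2 trans_le by metis

lemma join_join_absorb:
  assumes "a \<in> L" "c \<in> L" "b \<in> L" "le c b"
  shows "ljoin L le (ljoin L le a c) b = ljoin L le a b"
proof (rule antisym_le)
  have ab: "ljoin L le a b \<in> L" "le a (ljoin L le a b)" "le b (ljoin L le a b)"
    using assms join_closed join_upper1 join_upper2 by auto
  have "le c (ljoin L le a b)" using trans_le[OF assms(2,3) ab(1) assms(4) ab(3)] .
  then have "le (ljoin L le a c) (ljoin L le a b)" using join_least[OF assms(1,2) ab(1,2)] by blast
  then show "le (ljoin L le (ljoin L le a c) b) (ljoin L le a b)"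
    using join_least[OF join_closed[OF assms(1,2)] assms(3) ab(1)] ab(3) by blast
  have acb: "ljoin L le (ljoin L le a c) b \<in> L" "le (ljoin L le a c) (ljoin L le (ljoin L le a c) b)"
    "le b (ljoin L le (ljoin L le a c) b)"
    using assms join_closed join_upper1 join_upper2 by auto
  then have "le a (ljoin L le (ljoin L le a c) b)"
    using trans_le[OF assms(1) join_closed[OF assms(1,2)] acb(1) join_upper1[OF assms(1,2)]] by blast
  then show "le (ljoin L le a b) (ljoin L le (ljoin L le a c) b)"
    using join_least[OF assms(1,3) acb(1)] acb(3) by blast
qed (use assms join_closed in auto)

lemma ex_cover_below:
  assumes "x \<in> L" "y \<in> L" "le x y" "x \<noteq> y"
  shows "\<exists>c. covers L le x c \<and> le c y"
proof -
  let ?U = "{z \<in> L. le x z \<and> le z y \<and> z \<noteq> x}"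
  obtain c where c: "c \<in> ?U" "\<forall>z\<in>?U. le z c \<longrightarrow> z = c"
    using ex_minimal[of ?U y] assms refl_le by blast
  have "covers L le x c"
    using c assms(1,2) trans_le[of _ c y] unfolding covers_def by blast
  then show ?thesis using c by blast
qed

lemma lub_sub: "L' \<subseteq> L \<Longrightarrow> S \<subseteq> L \<Longrightarrow> lub L le S \<in> L' \<Longrightarrow> lub L' le S = lub L le S"
  by (rule lub_eqI) (use is_lub_lub[of S] in \<open>auto simp: is_lub_def\<close>)

lemma join_sub:
  "L' \<subseteq> L \<Longrightarrow> x \<in> L \<Longrightarrow> y \<in> L \<Longrightarrow> ljoin L le x y \<in> L' \<Longrightarrow> ljoin L' le x y = ljoin L le x y"
  unfolding ljoin_def by (rule lub_sub) auto

lemma meet_sub: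
  "L' \<subseteq> L \<Longrightarrow> x \<in> L \<Longrightarrow> y \<in> L \<Longrightarrow> lmeet L le x y \<in> L' \<Longrightarrow> lmeet L' le x y = lmeet L le x y"
  unfolding lmeet_def[of L'] by (rule glb_eqI) (use is_glb_meet[of x y] in \<open>auto simp: is_glb_def\<close>)

lemma finite_lattice_sub:
  assumes sub: "L' \<subseteq> L" "L' \<noteq> {}"
    and closed: "\<And>x y. x \<in> L' \<Longrightarrow> y \<in> L' \<Longrightarrow> ljoin L le x y \<in> L' \<and> lmeet L le x y \<in> L'"
  shows "finite_lattice L' le"
proof
  show "finite L'" using sub finite_L finite_subset by blast
  show "L' \<noteq> {}" by fact
  have "is_lub L' le {x, y} (ljoin L le x y) \<and> is_glb L' le {x, y} (lmeet L le x y)"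
    if "x \<in> L'" "y \<in> L'" for x y
    using that sub closed[OF that] is_lub_lub[of "{x, y}"] is_glb_meet[of x y]
    unfolding ljoin_def is_lub_def is_glb_def by auto
  then show "lattice_on L' le"
    using sub partial_order unfolding lattice_on_def partial_order_on'_def by blast
qed

lemma restr_L_sub: "restr_L L le F \<subseteq> L"
  by (auto simp: restr_L_def)

lemma contr_L_sub: "contr_L L le F \<subseteq> L"
  by (auto simp: contr_L_def)

lemma convex_restr_L: "F \<in> L \<Longrightarrow> convex_in L le (restr_L L le F)"
  unfolding convex_in_def restr_L_def using trans_le by blast

lemma convex_contr_L: "F \<in> L \<Longrightarrow> convex_in L le (contr_L L le F)"
  unfolding convex_in_def contr_L_def using trans_le by blast

lemma join_meet_restr_L:
  assumes "F \<in> L" "x \<in> restr_L L le F" "y \<in> restr_L L le F"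
  shows "ljoin L le x y \<in> restr_L L le F \<and> lmeet L le x y \<in> restr_L L le F"
  using assms join_closed join_least meet_closed meet_lower1 trans_le
  unfolding restr_L_def by (metis (no_types, lifting) mem_Collect_eq)

lemma join_meet_contr_L:
  assumes "F \<in> L" "x \<in> contr_L L le F" "y \<in> contr_L L le F"
  shows "ljoin L le x y \<in> contr_L L le F \<and> lmeet L le x y \<in> contr_L L le F"
  using assms join_closed join_upper1 meet_closed meet_greatest trans_le
  unfolding contr_L_def by (metis (no_types, lifting) mem_Collect_eq)

lemma finite_lattice_contr: "F \<in> L \<Longrightarrow> finite_lattice (contr_L L le F) le"
  using finite_lattice_sub[OF contr_L_sub _ join_meet_contr_L] refl_le by (auto simp: contr_L_def)

lemma lub_restr:
  assumes "F \<in> L" "S \<subseteq> restr_L L le F"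
  shows "lub (restr_L L le F) le S = lub L le S"
proof (rule lub_sub[OF restr_L_sub])
  show "S \<subseteq> L" using assms(2) restr_L_sub by blast
  then show "lub L le S \<in> restr_L L le F"
    using assms lub_closed lub_least[of S F] unfolding restr_L_def by blast
qed

lemma lub_contr:
  assumes "F \<in> L" "S \<subseteq> contr_L L le F"
  shows "lub (contr_L L le F) le S = lub L le (insert F S)"
proof (rule lub_eqI[OF contr_L_sub])
  have "insert F S \<subseteq> L" using assms contr_L_sub by blast
  then show "is_lub (contr_L L le F) le S (lub L le (insert F S))"
    using is_lub_lub[of "insert F S"] unfolding is_lub_def contr_L_def by auto
qed

lemma bot_restr: "F \<in> L \<Longrightarrow> lbot (restr_L L le F) le = bottom"
  unfolding lbot_def using lub_restr by blast

lemma bot_contr: "F \<in> L \<Longrightarrow> lbot (contr_L L le F) le = F"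
  unfolding lbot_def using lub_contr[of F "{}"] lub_eqI[OF subset_refl, of "{F}" F] refl_le
  by (auto simp: is_lub_def)

lemma atoms_restr: "F \<in> L \<Longrightarrow> atoms (restr_L L le F) le = {a \<in> atoms L le. le a F}"
  using covers_convex[OF restr_L_sub convex_restr_L] bot_restr bot_closed bot_least
  unfolding atoms_def by (auto simp: restr_L_def)

lemma atoms_contr: "F \<in> L \<Longrightarrow> atoms (contr_L L le F) le = {a. covers L le F a}"
  using covers_convex[OF contr_L_sub convex_contr_L] bot_contr refl_le
  unfolding atoms_def by (auto simp: contr_L_def covers_def)

lemma meet_contr:
  "F \<in> L \<Longrightarrow> x \<in> contr_L L le F \<Longrightarrow> y \<in> contr_L L le F \<Longrightarrow>
    lmeet (contr_L L le F) le x y = lmeet L le x y"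
  using meet_sub[OF contr_L_sub] join_meet_contr_L contr_L_sub by blast

lemma interval_contr: "interval (contr_L L le F) le F K = interval L le F K"
  by (auto simp: interval_def contr_L_def)

lemma family_contr_sub:
  "y \<in> (\<Pi>\<^sub>E K\<in>M. interval L le F K) \<Longrightarrow> y ` M \<subseteq> contr_L L le F"
  by (auto simp: interval_def contr_L_def)

lemma maxs_eqI:
  assumes S: "S \<subseteq> L" "T \<subseteq> S" and cofinal: "\<And>s. s \<in> S \<Longrightarrow> \<exists>t\<in>T. le s t"
    and antichain: "\<And>t t'. t \<in> T \<Longrightarrow> t' \<in> T \<Longrightarrow> le t t' \<Longrightarrow> t = t'"
  shows "maxs le S = T"
proof
  show "maxs le S \<subseteq> T"
    using cofinal S unfolding maxs_def by blast
  have "s = t" if st: "t \<in> T" "s \<in> S" "le t s" for s t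
  proof -
    obtain t' where t': "t' \<in> T" "le s t'" using cofinal[OF st(2)] by blast
    have L: "t \<in> L" "s \<in> L" "t' \<in> L" using st t' S by auto
    have "t = t'" using antichain[OF st(1) t'(1) trans_le[OF L st(3) t'(2)]] .
    then show ?thesis using antisym_le[OF L(2,1)] st(3) t'(2) by blast
  qed
  then show "T \<subseteq> maxs le S" using S unfolding maxs_def by blast
qed

end

section \<open>Geometric lattices\<close>

locale finite_geometric_lattice = finite_lattice +
  assumes geometric: "geometric_lattice L le"
begin

lemma atomistic: "x \<in> L \<Longrightarrow> x = lub L le {a \<in> atoms L le. le a x}"
  using geometric unfolding geometric_lattice_def by blast

lemma semimodular:
  "x \<in> L \<Longrightarrow> y \<in> L \<Longrightarrow> covers L le (lmeet L le x y) x \<Longrightarrow> covers L le (lmeet L le x y) y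
    \<Longrightarrow> covers L le x (ljoin L le x y) \<and> covers L le y (ljoin L le x y)"
  using geometric unfolding geometric_lattice_def by blast

lemma covers_meet_shift:
  assumes ab: "a \<in> L" "b \<in> L" and cov_a: "covers L le (lmeet L le a b) a"
    and c: "covers L le (lmeet L le a b) c" "le c b"
  shows "lmeet L le (ljoin L le a c) b = c" "covers L le c (ljoin L le a c)"
    "ljoin L le (ljoin L le a c) b = ljoin L le a b"
proof -
  let ?m = "lmeet L le a b" and ?a' = "ljoin L le a c"
  have m: "?m \<in> L" "le ?m a" "le ?m b" using ab meet_closed meet_lower1 meet_lower2 by auto
  have cL: "c \<in> L" using c(1) unfolding covers_def by blast
  have a': "?a' \<in> L" "le a ?a'" "le c ?a'"
    using ab cL join_closed join_upper1 join_upper2 by auto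
  have "lmeet L le a c = ?m"
  proof (rule antisym_le)
    have ac: "lmeet L le a c \<in> L" "le (lmeet L le a c) a" "le (lmeet L le a c) c"
      using ab(1) cL meet_closed meet_lower1 meet_lower2 by auto
    have "le (lmeet L le a c) b" using trans_le[OF ac(1) cL ab(2) ac(3) c(2)] .
    then show "le (lmeet L le a c) ?m" using meet_greatest[OF ab ac(1,2)] by blast
    show "le ?m (lmeet L le a c)"
      using ab cL c(1) m meet_greatest unfolding covers_def by blast
  qed (use ab cL meet_closed in auto)
  then show cov_c: "covers L le c ?a'"
    using semimodular[OF ab(1) cL] cov_a c(1) by simp
  have "le c (lmeet L le ?a' b)" using meet_greatest a' cL c(2) ab(2) by blast
  moreover have "le (lmeet L le ?a' b) ?a'" using meet_lower1 a' ab(2) by blast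
  ultimately have "lmeet L le ?a' b = c \<or> lmeet L le ?a' b = ?a'"
    using cov_c meet_closed[OF a'(1) ab(2)] unfolding covers_def by blast
  moreover have "lmeet L le ?a' b \<noteq> ?a'"
  proof
    assume "lmeet L le ?a' b = ?a'"
    then have "le ?a' b" using meet_lower2[OF a'(1) ab(2)] by simp
    then have "?m = a" using meet_absorb1 ab trans_le[OF ab(1) a'(1) ab(2) a'(2)] by blast
    then show False using cov_a unfolding covers_def by blast
  qed
  ultimately show "lmeet L le ?a' b = c" by blast
  show "ljoin L le ?a' b = ljoin L le a b" using join_join_absorb[OF ab(1) cL ab(2) c(2)] .
qed

text \<open>Induction on the length of \<open>[a \<sqinter> b, b]\<close>:
  \<open>covers_meet_shift\<close> moves the covering pair one step up a maximal chain of that interval.\<close>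

lemma covers_join_if_covers_meet:
  assumes "a \<in> L" "b \<in> L" "covers L le (lmeet L le a b) a"
  shows "covers L le b (ljoin L le a b)"
  using assms
proof (induction "card {z\<in>L. le (lmeet L le a b) z \<and> le z b}" arbitrary: a rule: less_induct)
  case less
  let ?m = "lmeet L le a b"
  have m: "?m \<in> L" "le ?m a" "le ?m b"
    using less.prems meet_closed meet_lower1 meet_lower2 by auto
  show ?case
  proof (cases "?m = b")
    case True
    then have "ljoin L le a b = a" using join_absorb1 less.prems m(2) by simp
    then show ?thesis using less.prems True by simp
  next
    case False
    then obtain c where c: "covers L le ?m c" "le c b"
      using ex_cover_below[OF m(1) less.prems(2) m(3)] by blast
    note shift = covers_meet_shift[OF less.prems c]
    have a'L: "ljoin L le a c \<in> L" using c(1) join_closed less.prems(1) unfolding covers_def by blast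
    have "card {z\<in>L. le c z \<and> le z b} < card {z\<in>L. le ?m z \<and> le z b}"
    proof (rule psubset_card_mono)
      show "finite {z\<in>L. le ?m z \<and> le z b}" using finite_L by simp
      have "?m \<noteq> c" "le ?m c" "c \<in> L" using c(1) unfolding covers_def by auto
      then show "{z\<in>L. le c z \<and> le z b} \<subset> {z\<in>L. le ?m z \<and> le z b}"
        using m c(2) trans_le antisym_le refl_le by blast
    qed
    then have "covers L le b (ljoin L le (ljoin L le a c) b)"
      using less.hyps a'L less.prems(2) shift(1,2) by simp
    then show ?thesis using shift(3) by simp
  qed
qed

lemma covers_join_atom:
  assumes a: "a \<in> atoms L le" and F: "F \<in> L" "\<not> le a F"
  shows "covers L le F (ljoin L le a F)"
proof -
  have aL: "a \<in> L" and bot_a: "covers L le bottom a" using a by (auto simp: atoms_def)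
  have "lmeet L le a F \<noteq> a" using meet_lower2[OF aL F(1)] F(2) by metis
  then have "lmeet L le a F = bottom"
    using bot_a bot_least meet_closed[OF aL F(1)] meet_lower1[OF aL F(1)]
    unfolding covers_def by blast
  then show ?thesis using covers_join_if_covers_meet[OF aL F(1)] bot_a by simp
qed

lemma geometric_lattice_sub:
  assumes sub: "L' \<subseteq> L" "L' \<noteq> {}" "convex_in L le L'"
    and closed: "\<And>x y. x \<in> L' \<Longrightarrow> y \<in> L' \<Longrightarrow> ljoin L le x y \<in> L' \<and> lmeet L le x y \<in> L'"
    and atomistic': "\<And>x. x \<in> L' \<Longrightarrow> x = lub L' le {a \<in> atoms L' le. le a x}"
  shows "geometric_lattice L' le"
proof -
  interpret L': finite_lattice L' le using finite_lattice_sub[OF sub(1,2) closed] .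
  have "covers L' le x (ljoin L' le x y) \<and> covers L' le y (ljoin L' le x y)"
    if xy: "x \<in> L'" "y \<in> L'" and cov: "covers L' le (lmeet L' le x y) x"
      "covers L' le (lmeet L' le x y) y" for x y
  proof -
    have xyL: "x \<in> L" "y \<in> L" using xy sub(1) by auto
    have join: "ljoin L' le x y = ljoin L le x y" and meet: "lmeet L' le x y = lmeet L le x y"
      using join_sub[OF sub(1) xyL] meet_sub[OF sub(1) xyL] closed[OF xy] by auto
    have "covers L le (lmeet L le x y) x" "covers L le (lmeet L le x y) y"
      using cov covers_convex[OF sub(1,3)] xy closed[OF xy] unfolding meet by auto
    then show ?thesis
      using semimodular[OF xyL] covers_convex[OF sub(1,3)] xy closed[OF xy] unfolding join
      by auto
  qed
  then show ?thesis
    unfolding geometric_lattice_def using L'.finite_L L'.L_nonempty L'.lattice_on_L atomistic'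
    by blast
qed

lemma geometric_lattice_restr:
  assumes F: "F \<in> L"
  shows "geometric_lattice (restr_L L le F) le"
proof (rule geometric_lattice_sub[OF restr_L_sub _ convex_restr_L[OF F] join_meet_restr_L[OF F]])
  show "restr_L L le F \<noteq> {}" using F refl_le by (auto simp: restr_L_def)
  fix x assume x: "x \<in> restr_L L le F"
  then have xL: "x \<in> L" "le x F" by (auto simp: restr_L_def)
  then have atoms_x: "{a \<in> atoms (restr_L L le F) le. le a x} = {a \<in> atoms L le. le a x}"
    using atoms_restr[OF F] trans_le[OF _ xL(1) F] by (auto simp: atoms_def)
  have "{a \<in> atoms L le. le a x} \<subseteq> restr_L L le F"
    using xL trans_le[OF _ xL(1) F] by (auto simp: atoms_def restr_L_def)
  then show "x = lub (restr_L L le F) le {a \<in> atoms (restr_L L le F) le. le a x}"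
    unfolding atoms_x using lub_restr[OF F] atomistic[OF xL(1)] by simp
qed

lemma atomistic_contr:
  assumes F: "F \<in> L" and x: "x \<in> contr_L L le F"
  shows "x = lub (contr_L L le F) le {a \<in> atoms (contr_L L le F) le. le a x}"
proof -
  have xL: "x \<in> L" "le F x" using x by (auto simp: contr_L_def)
  define A where "A = {a. covers L le F a \<and> le a x}"
  have A_sub: "A \<subseteq> contr_L L le F" unfolding A_def by (auto simp: covers_def contr_L_def)
  have FA_sub: "insert F A \<subseteq> L" using A_sub F contr_L_sub by blast
  define y where "y = lub L le (insert F A)"
  have y: "y \<in> L" "le F y" "\<And>a. a \<in> A \<Longrightarrow> le a y"
    unfolding y_def using lub_closed[OF FA_sub] lub_upper[OF FA_sub] by auto
  have "le y x" unfolding y_def using lub_least[OF FA_sub xL(1)] xL(2) A_def by blast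
  moreover have "le x y"
  proof -
    have "le a y" if a: "a \<in> atoms L le" "le a x" for a
    proof -
      have aL: "a \<in> L" using a by (simp add: atoms_def)
      show ?thesis
      proof (cases "le a F")
        case True
        then show ?thesis using trans_le[OF aL F y(1) _ y(2)] by blast
      next
        case False
        have "ljoin L le a F \<in> A"
          using covers_join_atom[OF a(1) F False] join_least[OF aL F xL(1) a(2) xL(2)]
          unfolding A_def by blast
        then show ?thesis
          using y(3) trans_le[OF aL join_closed[OF aL F] y(1) join_upper1[OF aL F]] by blast
      qed
    qed
    moreover have "{a \<in> atoms L le. le a x} \<subseteq> L" by (auto simp: atoms_def)
    ultimately have "le (lub L le {a \<in> atoms L le. le a x}) y"
      using lub_least[OF _ y(1)] by blast
    then show ?thesis using atomistic[OF xL(1)] by simp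
  qed
  ultimately have "x = y" using antisym_le[OF xL(1) y(1)] by blast
  moreover have "{a \<in> atoms (contr_L L le F) le. le a x} = A"
    unfolding atoms_contr[OF F] A_def by blast
  ultimately show ?thesis using lub_contr[OF F A_sub] y_def by simp
qed

lemma geometric_lattice_contr:
  assumes F: "F \<in> L"
  shows "geometric_lattice (contr_L L le F) le"
proof (rule geometric_lattice_sub[OF contr_L_sub _ convex_contr_L[OF F] join_meet_contr_L[OF F]])
  show "contr_L L le F \<noteq> {}" using F refl_le by (auto simp: contr_L_def)
qed (use atomistic_contr[OF F] in blast)+

end

section \<open>The join map of a building set\<close>

definition join_map_iso :: "'a set \<Rightarrow> ('a \<Rightarrow> 'a \<Rightarrow> bool) \<Rightarrow> 'a set \<Rightarrow> 'a \<Rightarrow> bool" where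
  "join_map_iso L le M H \<longleftrightarrow>
     (let P = (\<Pi>\<^sub>E K\<in>M. interval L le (lbot L le) K); j = (\<lambda>x. lub L le (x ` M))
      in bij_betw j P (interval L le (lbot L le) H) \<and>
         (\<forall>x\<in>P. \<forall>y\<in>P. (\<forall>K\<in>M. le (x K) (y K)) \<longleftrightarrow> le (j x) (j y)))"

lemma building_set_iff_join_map_iso:
  "building_set L le \<G> \<longleftrightarrow> \<G> \<subseteq> L - {lbot L le} \<and>
     (\<forall>F\<in>L. F \<noteq> lbot L le \<longrightarrow> join_map_iso L le (maxs le {G \<in> \<G>. le G F}) F)"
  by (simp only: building_set_def join_map_iso_def Let_def)

context finite_lattice
begin

lemma ex_single_family:
  assumes M: "M \<subseteq> L" "G \<in> M" and z: "z \<in> interval L le bottom G"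
  obtains e where "e \<in> (\<Pi>\<^sub>E K\<in>M. interval L le bottom K)" "e G = z"
    "\<And>K. K \<in> M \<Longrightarrow> K \<noteq> G \<Longrightarrow> e K = bottom" "lub L le (e ` M) = z"
proof
  define e where "e = restrict (\<lambda>K. if K = G then z else bottom) M"
  have zL: "z \<in> L" using z by (simp add: interval_def)
  show "e \<in> (\<Pi>\<^sub>E K\<in>M. interval L le bottom K)"
    unfolding e_def
  proof (rule restrict_PiE_iff[THEN iffD2], intro ballI)
    fix K assume "K \<in> M"
    then have "bottom \<in> interval L le bottom K"
      using M bot_closed bot_least refl_le by (auto simp: interval_def)
    then show "(if K = G then z else bottom) \<in> interval L le bottom K" using z by simp
  qed
  show "e G = z" "\<And>K. K \<in> M \<Longrightarrow> K \<noteq> G \<Longrightarrow> e K = bottom"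
    unfolding e_def using M by auto
  have "e ` M \<subseteq> {z, bottom}" "z \<in> e ` M" unfolding e_def using M by auto
  then have "is_lub L le (e ` M) z"
    unfolding is_lub_def using zL refl_le[OF zL] bot_least[OF zL] by auto
  then show "lub L le (e ` M) = z" using lub_eqI[OF subset_refl] by blast
qed

lemma family_le_lub:
  "x \<in> (\<Pi>\<^sub>E K\<in>M. interval L le bottom K) \<Longrightarrow> K \<in> M \<Longrightarrow> le (x K) (lub L le (x ` M))"
  by (rule lub_upper) (auto simp: interval_def)

lemma family_image_sub: "x \<in> (\<Pi>\<^sub>E K\<in>M. interval L le bottom K) \<Longrightarrow> x ` M \<subseteq> L"
  by (auto simp: interval_def)

lemma lub_family_mono:
  assumes x: "x \<in> (\<Pi>\<^sub>E K\<in>M. interval L le bottom K)" and y: "y \<in> (\<Pi>\<^sub>E K\<in>M. interval L le bottom K)"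
    and le_xy: "\<And>K. K \<in> M \<Longrightarrow> le (x K) (y K)"
  shows "le (lub L le (x ` M)) (lub L le (y ` M))"
proof (rule lub_least[OF family_image_sub[OF x] lub_closed[OF family_image_sub[OF y]]])
  fix s assume "s \<in> x ` M"
  then obtain K where K: "K \<in> M" "s = x K" by blast
  have "x K \<in> L" "y K \<in> L" using x y K by (auto simp: interval_def)
  then show "le s (lub L le (y ` M))"
    using trans_le[OF _ _ lub_closed[OF family_image_sub[OF y]] le_xy[OF K(1)] family_le_lub[OF y K(1)]]
      K(2) by blast
qed

lemma join_map_iso_meet_component:
  assumes iso: "join_map_iso L le M H" and M: "M \<subseteq> L"
    and y: "y \<in> (\<Pi>\<^sub>E K\<in>M. interval L le bottom K)" and G: "G \<in> M"
  shows "lmeet L le (lub L le (y ` M)) G = y G"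
proof -
  let ?s = "lub L le (y ` M)"
  have sL: "?s \<in> L" using lub_closed[OF family_image_sub[OF y]] .
  have GL: "G \<in> L" using G M by blast
  have yG: "y G \<in> L" "le (y G) G" using y G by (auto simp: interval_def)
  let ?z = "lmeet L le ?s G"
  have z: "?z \<in> interval L le bottom G"
    using meet_closed[OF sL GL] meet_lower2[OF sL GL] bot_least by (simp add: interval_def)
  obtain e where e: "e \<in> (\<Pi>\<^sub>E K\<in>M. interval L le bottom K)" "e G = ?z"
    "\<And>K. K \<in> M \<Longrightarrow> K \<noteq> G \<Longrightarrow> e K = bottom" "lub L le (e ` M) = ?z"
    using ex_single_family[OF M G z] by blast
  have "le (lub L le (e ` M)) ?s" using e(4) meet_lower1[OF sL GL] by simp
  then have "\<forall>K\<in>M. le (e K) (y K)"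
    using iso e(1) y unfolding join_map_iso_def Let_def by blast
  then have "le ?z (y G)" using G e(2) by metis
  moreover have "le (y G) ?z"
    using meet_greatest[OF sL GL yG(1) family_le_lub[OF y G] yG(2)] .
  ultimately show ?thesis using antisym_le[OF meet_closed[OF sL GL] yG(1)] by blast
qed

lemma join_map_iso_meet_decomp:
  assumes iso: "join_map_iso L le M H" and M: "M \<subseteq> L" and w: "w \<in> L" "le w H"
  shows "w = lub L le ((\<lambda>G. lmeet L le w G) ` M)"
proof -
  have "w \<in> interval L le bottom H" using w bot_least by (simp add: interval_def)
  then obtain x where x: "x \<in> (\<Pi>\<^sub>E K\<in>M. interval L le bottom K)" "w = lub L le (x ` M)"
    using iso unfolding join_map_iso_def Let_def bij_betw_def by blast
  then have "(\<lambda>G. lmeet L le w G) ` M = x ` M"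
    using join_map_iso_meet_component[OF iso M x(1)] by simp
  then show ?thesis using x(2) by simp
qed

lemma join_map_iso_meet_distinct:
  assumes iso: "join_map_iso L le M H" and M: "M \<subseteq> L" "G \<in> M" "G' \<in> M" "G \<noteq> G'"
  shows "lmeet L le G G' = bottom"
proof -
  have G: "G \<in> interval L le bottom G"
    using M bot_least refl_le by (auto simp: interval_def)
  obtain e where e: "e \<in> (\<Pi>\<^sub>E K\<in>M. interval L le bottom K)" "e G = G"
    "\<And>K. K \<in> M \<Longrightarrow> K \<noteq> G \<Longrightarrow> e K = bottom" "lub L le (e ` M) = G"
    using ex_single_family[OF M(1,2) G] by blast
  show ?thesis
    using join_map_iso_meet_component[OF iso M(1) e(1) M(3)] e(3)[OF M(3)] M(4) e(4) by simp
qed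

lemma join_map_isoI:
  assumes M: "M \<subseteq> L" and H: "H \<in> L" "\<And>K. K \<in> M \<Longrightarrow> le K H"
    and decomp: "\<And>w. w \<in> L \<Longrightarrow> le w H \<Longrightarrow> w = lub L le ((\<lambda>K. lmeet L le w K) ` M)"
    and component: "\<And>y K. y \<in> (\<Pi>\<^sub>E K\<in>M. interval L le bottom K) \<Longrightarrow> K \<in> M \<Longrightarrow>
      lmeet L le (lub L le (y ` M)) K = y K"
  shows "join_map_iso L le M H"
proof -
  let ?P = "\<Pi>\<^sub>E K\<in>M. interval L le bottom K"
  let ?j = "\<lambda>y. lub L le (y ` M)"
  let ?m = "\<lambda>w. restrict (\<lambda>K. lmeet L le w K) M"
  have j_closed: "?j y \<in> interval L le bottom H" if y: "y \<in> ?P" for y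
  proof -
    have "le (y K) H" if "K \<in> M" for K
      using y that M H trans_le[of "y K" K H] by (auto simp: interval_def)
    then show ?thesis
      using lub_closed[OF family_image_sub[OF y]] lub_least[OF family_image_sub[OF y] H(1)]
        bot_least by (auto simp: interval_def)
  qed
  have m_closed: "?m w \<in> ?P" if "w \<in> interval L le bottom H" for w
    using that M meet_closed meet_lower2 bot_least by (auto simp: interval_def)
  have "bij_betw ?j ?P (interval L le bottom H)"
  proof (rule bij_betw_byWitness[where f' = ?m])
    show "\<forall>y\<in>?P. ?m (?j y) = y"
      using component by (auto intro: PiE_ext)
    show "\<forall>w\<in>interval L le bottom H. ?j (?m w) = w"
      using decomp by (auto simp: interval_def)
  qed (use j_closed m_closed in blast)+
  moreover have "(\<forall>K\<in>M. le (x K) (y K)) \<longleftrightarrow> le (?j x) (?j y)" if x: "x \<in> ?P" and y: "y \<in> ?P" for x y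
  proof
    assume "\<forall>K\<in>M. le (x K) (y K)"
    then show "le (?j x) (?j y)" using lub_family_mono[OF x y] by blast
  next
    assume le_j: "le (?j x) (?j y)"
    show "\<forall>K\<in>M. le (x K) (y K)"
    proof
      fix K assume K: "K \<in> M"
      have "le (lmeet L le (?j x) K) (lmeet L le (?j y) K)"
        using meet_mono[OF lub_closed[OF family_image_sub[OF x]] lub_closed[OF family_image_sub[OF y]]
            _ le_j] M K by blast
      then show "le (x K) (y K)" using component[OF x K] component[OF y K] by simp
    qed
  qed
  ultimately show ?thesis unfolding join_map_iso_def Let_def by blast
qed

lemma join_map_iso_restr:
  assumes F: "F \<in> L" and H: "H \<in> restr_L L le F" and M: "M \<subseteq> L" "\<And>K. K \<in> M \<Longrightarrow> le K H"
  shows "join_map_iso (restr_L L le F) le M H \<longleftrightarrow> join_map_iso L le M H"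
proof -
  let ?R = "restr_L L le F" and ?P = "\<Pi>\<^sub>E K\<in>M. interval L le bottom K"
  have HL: "H \<in> L" "le H F" using H by (auto simp: restr_L_def)
  have below_F: "le x F" if "x \<in> L" "le x H" for x using trans_le[OF that(1) HL(1) F that(2) HL(2)] .
  have interval_eq: "interval ?R le bottom K = interval L le bottom K" if "K \<in> L" "le K H" for K
    using trans_le[OF _ that(1) F _ below_F[OF that]] unfolding interval_def restr_L_def by auto
  have P_eq: "(\<Pi>\<^sub>E K\<in>M. interval ?R le bottom K) = ?P"
    using interval_eq M by (intro PiE_cong) blast
  have lub_eq: "lub ?R le (x ` M) = lub L le (x ` M)" if x: "x \<in> ?P" for x
  proof (rule lub_restr[OF F], rule subsetI)
    fix t assume "t \<in> x ` M"
    then obtain K where K: "K \<in> M" "t = x K" by blast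
    then have "x K \<in> L" "le (x K) K" "K \<in> L" using x M(1) by (auto simp: interval_def)
    then have "le (x K) H" using trans_le[OF _ _ HL(1) _ M(2)[OF K(1)]] by blast
    then show "t \<in> ?R" using below_F \<open>x K \<in> L\<close> K(2) by (simp add: restr_L_def)
  qed
  have "bij_betw (\<lambda>x. lub ?R le (x ` M)) ?P (interval L le bottom H) \<longleftrightarrow>
      bij_betw (\<lambda>x. lub L le (x ` M)) ?P (interval L le bottom H)"
    using lub_eq by (rule bij_betw_cong)
  moreover have "(\<forall>x\<in>?P. \<forall>y\<in>?P. (\<forall>K\<in>M. le (x K) (y K)) \<longleftrightarrow> le (lub ?R le (x ` M)) (lub ?R le (y ` M)))
      \<longleftrightarrow> (\<forall>x\<in>?P. \<forall>y\<in>?P. (\<forall>K\<in>M. le (x K) (y K)) \<longleftrightarrow> le (lub L le (x ` M)) (lub L le (y ` M)))"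
    using lub_eq by simp
  ultimately show ?thesis
    unfolding join_map_iso_def Let_def bot_restr[OF F] P_eq interval_eq[OF HL(1) refl_le[OF HL(1)]]
    by blast
qed

end

section \<open>Nested sets\<close>

lemma minimal_non_nested:
  assumes N: "N \<subseteq> \<G>" "\<not> nested L le \<G> N" and proper: "\<And>N'. N' \<subset> N \<Longrightarrow> nested L le \<G> N'"
  shows "antichain_on le N \<and> finite N \<and> 2 \<le> card N \<and> lub L le N \<in> \<G> \<and>
    (\<forall>T\<subset>N. 2 \<le> card T \<longrightarrow> lub L le T \<notin> \<G>)"
proof -
  obtain A T where AT: "A \<subseteq> N" "antichain_on le A" "T \<subseteq> A" "finite T" "2 \<le> card T"
    "lub L le T \<in> \<G>"
    using N unfolding nested_def by blast
  have T_antichain: "antichain_on le T" using AT(2,3) unfolding antichain_on_def by blast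
  have "T = N"
  proof (rule ccontr)
    assume "T \<noteq> N"
    then have "nested L le \<G> T" using AT(1,3) proper by blast
    then show False using T_antichain AT(4-6) unfolding nested_def by blast
  qed
  have "lub L le T' \<notin> \<G>" if "T' \<subset> N" "2 \<le> card T'" for T'
  proof -
    have "antichain_on le T'" using T_antichain \<open>T = N\<close> that(1) unfolding antichain_on_def by blast
    moreover have "finite T'" using that(2) card.infinite by fastforce
    ultimately show ?thesis using proper[OF that(1)] that(2) unfolding nested_def by blast
  qed
  with \<open>T = N\<close> T_antichain AT(4-6) show ?thesis by simp
qed

lemma flag_built_non_nested_pair:
  assumes flag: "flag_built L le \<G>" and T: "T \<subseteq> \<G> - maxs le \<G>" "finite T" "\<not> nested L le \<G> T"
  shows "\<exists>u\<in>T. \<exists>v\<in>T. u \<noteq> v \<and> lub L le {u, v} \<in> \<G>"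
proof -
  let ?P = "\<lambda>N. N \<subseteq> T \<and> \<not> nested L le \<G> N"
  obtain N where N: "?P N" and min: "\<And>N'. ?P N' \<Longrightarrow> card N \<le> card N'"
    using arg_min_nat_lemma[of ?P T card] T(3) by blast
  have proper: "nested L le \<G> N'" if "N' \<subset> N" for N'
    using min[of N'] psubset_card_mono[OF finite_subset[OF _ T(2)] that] that N by force
  have "N \<subseteq> \<G> - maxs le \<G>" "N \<notin> nested_complex L le \<G>"
    using N T(1) by (auto simp: nested_complex_def)
  moreover have "N' \<in> nested_complex L le \<G>" if "N' \<subset> N" for N'
    using proper[OF that] that N T(1) unfolding nested_complex_def by blast
  ultimately have "card N = 2" using flag unfolding flag_built_def by blast
  then obtain u v where "N = {u, v}" "u \<noteq> v" by (auto simp: card_2_iff)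
  moreover have "lub L le N \<in> \<G>" using minimal_non_nested[of N \<G>] N T(1) proper by blast
  ultimately show ?thesis using N by blast
qed

section \<open>Restriction and contraction of a building set\<close>

locale building = finite_lattice +
  fixes \<G> :: "'a set"
  assumes building_set: "building_set L le \<G>"
begin

abbreviation maxG :: "'a \<Rightarrow> 'a set" where
  "maxG H \<equiv> maxs le {G \<in> \<G>. le G H}"

lemma G_sub: "\<G> \<subseteq> L" and G_ne_bottom: "G \<in> \<G> \<Longrightarrow> G \<noteq> bottom"
  using building_set unfolding building_set_def by auto

lemma maxG_sub: "maxG H \<subseteq> \<G>"
  by (auto simp: maxs_def)

lemma maxG_L: "maxG H \<subseteq> L"
  using maxG_sub G_sub by blast

lemma maxG_le: "G \<in> maxG H \<Longrightarrow> le G H"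
  by (auto simp: maxs_def)

lemma maxG_maximal: "G \<in> maxG H \<Longrightarrow> G' \<in> \<G> \<Longrightarrow> le G G' \<Longrightarrow> le G' H \<Longrightarrow> G' = G"
  by (auto simp: maxs_def)

lemma ex_maxG_above: "G \<in> \<G> \<Longrightarrow> le G H \<Longrightarrow> \<exists>G'\<in>maxG H. le G G'"
  using ex_maximal[of "{G \<in> \<G>. le G H}" G] G_sub by (auto simp: maxs_def)

lemma maxG_ne_bottom: "H \<in> L \<Longrightarrow> G \<in> maxG H \<Longrightarrow> H \<noteq> bottom"
  using maxG_le maxG_sub maxG_L G_ne_bottom antisym_le bot_closed bot_least by blast

lemma meet_lub_maxG:
  assumes "H \<in> L" "y \<in> (\<Pi>\<^sub>E K\<in>maxG H. interval L le bottom K)" "G \<in> maxG H"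
  shows "lmeet L le (lub L le (y ` maxG H)) G = y G"
  using assms building_set maxG_ne_bottom join_map_iso_meet_component[OF _ maxG_L]
  unfolding building_set_iff_join_map_iso by blast

lemma lub_meet_maxG:
  assumes H: "H \<in> L" and w: "w \<in> L" "le w H"
  shows "w = lub L le ((\<lambda>G. lmeet L le w G) ` maxG H)"
proof (cases "H = bottom")
  case True
  then have "maxG H = {}" using maxG_ne_bottom[OF H] by blast
  moreover have "w = bottom" using True w antisym_le bot_closed bot_least by blast
  ultimately show ?thesis by (simp add: lbot_def)
next
  case False
  then show ?thesis
    using building_set H w join_map_iso_meet_decomp[OF _ maxG_L]
    unfolding building_set_iff_join_map_iso by blast
qed

lemma lub_maxG:
  assumes H: "H \<in> L"
  shows "lub L le (maxG H) = H"
proof -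
  have "lmeet L le H G = G" if "G \<in> maxG H" for G
    using meet_absorb2[OF H _ maxG_le[OF that]] maxG_L that by blast
  then have "(\<lambda>G. lmeet L le H G) ` maxG H = maxG H" by force
  then show ?thesis using lub_meet_maxG[OF H H refl_le[OF H]] by simp
qed

lemma meet_maxG_distinct:
  assumes "H \<in> L" "G \<in> maxG H" "G' \<in> maxG H" "G \<noteq> G'"
  shows "lmeet L le G G' = bottom"
  using assms building_set maxG_ne_bottom join_map_iso_meet_distinct[OF _ maxG_L]
  unfolding building_set_iff_join_map_iso by blast

lemma meet_lub_distrib:
  assumes H: "H \<in> L" and S: "S \<subseteq> L" "\<And>s. s \<in> S \<Longrightarrow> le s H" and G: "G \<in> maxG H"
  shows "lmeet L le (lub L le S) G = lub L le ((\<lambda>s. lmeet L le s G) ` S)"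
proof -
  let ?M = "maxG H"
  define x where "x = restrict (\<lambda>K. lub L le ((\<lambda>s. lmeet L le s K) ` S)) ?M"
  have img: "(\<lambda>s. lmeet L le s K) ` S \<subseteq> L" if "K \<in> L" for K
    using S(1) meet_closed that by blast
  have x: "x \<in> (\<Pi>\<^sub>E K\<in>?M. interval L le bottom K)"
    unfolding x_def
  proof (rule restrict_PiE_iff[THEN iffD2], intro ballI)
    fix K assume "K \<in> ?M"
    then have KL: "K \<in> L" using maxG_L by blast
    have "le (lub L le ((\<lambda>s. lmeet L le s K) ` S)) K"
      using lub_least[OF img[OF KL] KL] meet_lower2 S(1) KL by blast
    then show "lub L le ((\<lambda>s. lmeet L le s K) ` S) \<in> interval L le bottom K"
      using lub_closed[OF img[OF KL]] bot_least by (simp add: interval_def)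
  qed
  have "lub L le (x ` ?M) = lub L le ((\<lambda>K. lub L le ((\<lambda>s. lmeet L le s K) ` S)) ` ?M)"
    unfolding x_def by simp
  also have "\<dots> = lub L le (\<Union>K\<in>?M. (\<lambda>s. lmeet L le s K) ` S)"
    by (rule lub_UN) (use img maxG_L in blast)
  also have "(\<Union>K\<in>?M. (\<lambda>s. lmeet L le s K) ` S) = (\<Union>s\<in>S. (\<lambda>K. lmeet L le s K) ` ?M)"
    by blast
  also have "lub L le \<dots> = lub L le ((\<lambda>s. lub L le ((\<lambda>K. lmeet L le s K) ` ?M)) ` S)"
    by (rule lub_UN[symmetric]) (use meet_closed S(1) maxG_L in blast)
  also have "(\<lambda>s. lub L le ((\<lambda>K. lmeet L le s K) ` ?M)) ` S = S"
  proof -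
    have "lub L le ((\<lambda>K. lmeet L le s K) ` ?M) = s" if "s \<in> S" for s
      using lub_meet_maxG[OF H _ S(2)[OF that]] S(1) that by auto
    then show ?thesis by simp
  qed
  finally show ?thesis using meet_lub_maxG[OF H x G] G unfolding x_def by simp
qed

lemma meet_join_maxG_le:
  assumes H: "H \<in> L" and F: "F \<in> L" "le F H" and G: "G \<in> maxG H" "G' \<in> maxG H" "G \<noteq> G'"
  shows "le (lmeet L le (ljoin L le F G) G') F"
proof -
  have GL: "G \<in> L" "G' \<in> L" using G maxG_L by auto
  have "lmeet L le (ljoin L le F G) G' = lub L le {lmeet L le F G', lmeet L le G G'}"
    unfolding ljoin_def using meet_lub_distrib[OF H, of "{F, G}" G'] F GL G maxG_le by auto
  also have "\<dots> = lub L le {lmeet L le F G', bottom}"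
    using meet_maxG_distinct[OF H G] by simp
  also have "le \<dots> F"
    using lub_least[of "{lmeet L le F G', bottom}" F] F meet_closed[OF F(1) GL(2)] bot_closed
      meet_lower1[OF F(1) GL(2)] bot_least[OF F(1)] by blast
  finally show ?thesis .
qed

lemma building_set_restr:
  assumes F: "F \<in> L"
  shows "building_set (restr_L L le F) le (restr_G \<G> le F)"
  unfolding building_set_iff_join_map_iso bot_restr[OF F]
proof (intro conjI ballI impI)
  show "restr_G \<G> le F \<subseteq> restr_L L le F - {bottom}"
    using G_sub G_ne_bottom by (auto simp: restr_G_def restr_L_def)
  fix H assume H: "H \<in> restr_L L le F" "H \<noteq> bottom"
  then have "{G \<in> restr_G \<G> le F. le G H} = {G \<in> \<G>. le G H}"
    using G_sub trans_le[OF _ _ F] by (auto simp: restr_G_def restr_L_def)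
  moreover have "join_map_iso L le (maxG H) H"
    using building_set H unfolding building_set_iff_join_map_iso restr_L_def by blast
  ultimately show "join_map_iso (restr_L L le F) le (maxs le {G \<in> restr_G \<G> le F. le G H}) H"
    using join_map_iso_restr[OF F H(1) maxG_L maxG_le] by simp
qed

lemma nested_restr_iff:
  assumes F: "F \<in> L" and S: "S \<subseteq> restr_G \<G> le F"
  shows "nested (restr_L L le F) le (restr_G \<G> le F) S \<longleftrightarrow> nested L le \<G> S"
proof -
  have lub_iff: "lub (restr_L L le F) le T \<in> restr_G \<G> le F \<longleftrightarrow> lub L le T \<in> \<G>" if "T \<subseteq> S" for T
  proof -
    have T: "T \<subseteq> restr_L L le F" using that S G_sub by (auto simp: restr_G_def restr_L_def)
    then have "le (lub L le T) F" using lub_least[OF _ F] restr_L_sub by (auto simp: restr_L_def)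
    then show ?thesis using lub_restr[OF F T] by (auto simp: restr_G_def)
  qed
  have "S \<subseteq> \<G>" using S by (auto simp: restr_G_def)
  then show ?thesis
    unfolding nested_def
  proof (intro iffI conjI allI impI)
    fix A T assume "S \<subseteq> restr_G \<G> le F \<and> (\<forall>A\<subseteq>S. antichain_on le A \<longrightarrow>
        (\<forall>T\<subseteq>A. finite T \<and> 2 \<le> card T \<longrightarrow> lub (restr_L L le F) le T \<notin> restr_G \<G> le F))"
      and "A \<subseteq> S" "antichain_on le A" "T \<subseteq> A" "finite T \<and> 2 \<le> card T"
    then show "lub L le T \<notin> \<G>" using lub_iff[of T] by blast
  next
    fix A T assume "S \<subseteq> \<G> \<and> (\<forall>A\<subseteq>S. antichain_on le A \<longrightarrow>
        (\<forall>T\<subseteq>A. finite T \<and> 2 \<le> card T \<longrightarrow> lub L le T \<notin> \<G>))"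
      and "A \<subseteq> S" "antichain_on le A" "T \<subseteq> A" "finite T \<and> 2 \<le> card T"
    then show "lub (restr_L L le F) le T \<notin> restr_G \<G> le F" using lub_iff[of T] by blast
  qed (use S in auto)
qed

lemma flag_built_restr:
  assumes F: "F \<in> L" and flag: "flag_built L le \<G>"
  shows "flag_built (restr_L L le F) le (restr_G \<G> le F)"
  unfolding flag_built_def
proof (intro allI impI)
  let ?R = "restr_L L le F" and ?GR = "restr_G \<G> le F"
  have vertices: "?GR - maxs le ?GR \<subseteq> \<G> - maxs le \<G>"
    by (auto simp: maxs_def restr_G_def)
  fix N assume N: "N \<subseteq> ?GR - maxs le ?GR \<and> N \<notin> nested_complex ?R le ?GR \<and>
      (\<forall>N'. N' \<subset> N \<longrightarrow> N' \<in> nested_complex ?R le ?GR)"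
  have face_iff: "N' \<in> nested_complex ?R le ?GR \<longleftrightarrow> N' \<in> nested_complex L le \<G>" if "N' \<subseteq> N" for N'
  proof -
    have "N' \<subseteq> ?GR - maxs le ?GR" using that N by blast
    then show ?thesis using vertices nested_restr_iff[OF F, of N'] unfolding nested_complex_def by auto
  qed
  have "N \<subseteq> \<G> - maxs le \<G>" using N vertices by blast
  moreover have "N \<notin> nested_complex L le \<G>" using N face_iff[OF subset_refl] by blast
  moreover have "\<forall>N'. N' \<subset> N \<longrightarrow> N' \<in> nested_complex L le \<G>" using N face_iff by blast
  ultimately show "card N = 2" using flag unfolding flag_built_def by blast
qed

lemma contr_G_sub: "F \<in> L \<Longrightarrow> contr_G L le \<G> F \<subseteq> L"
  using G_sub join_closed by (auto simp: contr_G_def)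

lemma ex_maxG_join_eq:
  assumes F: "F \<in> L" and K: "K \<in> contr_G L le \<G> F"
  shows "\<exists>G. G \<in> maxG K \<and> ljoin L le F G = K \<and> \<not> le G F"
proof -
  obtain G' where G': "G' \<in> \<G>" "K = ljoin L le F G'" "K \<noteq> F" using K by (auto simp: contr_G_def)
  have G'L: "G' \<in> L" using G' G_sub by blast
  have KL: "K \<in> L" using join_closed[OF F G'L] G' by simp
  obtain G where G: "G \<in> maxG K" "le G' G"
    using ex_maxG_above[OF G'(1)] join_upper2[OF F G'L] G'(2) by blast
  have GL: "G \<in> L" using G maxG_L by blast
  have "ljoin L le F G = K"
  proof (rule antisym_le[OF join_closed[OF F GL] KL])
    show "le (ljoin L le F G) K"
      using join_least[OF F GL KL] join_upper1[OF F G'L] G'(2) maxG_le[OF G(1)] by simp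
    show "le K (ljoin L le F G)" using join_mono[OF F G'L GL G(2)] G'(2) by simp
  qed
  moreover have "\<not> le G F" using calculation join_absorb1[OF F GL] G'(3) by auto
  ultimately show ?thesis using G(1) by blast
qed

context
  fixes F H :: 'a
  assumes F: "F \<in> L" and H: "H \<in> L" "le F H" "H \<noteq> F"
begin

abbreviation contr_maxG :: "'a set" where
  "contr_maxG \<equiv> (\<lambda>G. ljoin L le F G) ` {G \<in> maxG H. \<not> le G F}"

lemma contr_maxG_bounds: "K \<in> contr_maxG \<Longrightarrow> K \<in> L \<and> le F K \<and> le K H"
  using F H maxG_L maxG_le join_closed join_upper1 join_least by blast

lemma eq_if_join_maxG_le:
  assumes G: "G \<in> maxG H" "G' \<in> maxG H" "\<not> le G F" and le_joins: "le (ljoin L le F G) (ljoin L le F G')"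
  shows "G = G'"
proof (rule ccontr)
  assume "G \<noteq> G'"
  have GL: "G \<in> L" "G' \<in> L" using G maxG_L by auto
  have "le G (ljoin L le F G')"
    using trans_le[OF GL(1) join_closed[OF F GL(1)] join_closed[OF F GL(2)] join_upper2[OF F GL(1)]
        le_joins] .
  then have "lmeet L le (ljoin L le F G') G = G"
    using meet_absorb2 join_closed[OF F GL(2)] GL(1) by blast
  then have "le G F" using meet_join_maxG_le[OF H(1) F H(2) G(2,1)] \<open>G \<noteq> G'\<close> by simp
  then show False using G(3) by blast
qed

lemma maxs_contr_G: "maxs le {K \<in> contr_G L le \<G> F. le K H} = contr_maxG"
proof (rule maxs_eqI)
  show "{K \<in> contr_G L le \<G> F. le K H} \<subseteq> L"
    using G_sub join_closed[OF F] by (auto simp: contr_G_def)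
  show "contr_maxG \<subseteq> {K \<in> contr_G L le \<G> F. le K H}"
  proof
    fix K assume K: "K \<in> contr_maxG"
    then obtain G where G: "G \<in> maxG H" "\<not> le G F" "K = ljoin L le F G" by blast
    have "K \<noteq> F" using G join_upper2[OF F] maxG_L by force
    then show "K \<in> {K \<in> contr_G L le \<G> F. le K H}"
      using G maxG_sub contr_maxG_bounds[OF K] by (auto simp: contr_G_def)
  qed
  show "\<exists>K'\<in>contr_maxG. le K K'" if "K \<in> {K \<in> contr_G L le \<G> F. le K H}" for K
  proof -
    have K: "K \<in> contr_G L le \<G> F" "le K H" using that by auto
    then obtain G where G: "G \<in> \<G>" "K = ljoin L le F G" unfolding contr_G_def by blast
    have "K \<noteq> F" using K(1) unfolding contr_G_def by blast
    have GL: "G \<in> L" using G G_sub by blast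
    have "le G H" using trans_le[OF GL join_closed[OF F GL] H(1) join_upper2[OF F GL]] G K(2) by blast
    then obtain G' where G': "G' \<in> maxG H" "le G G'" using ex_maxG_above G(1) by blast
    have G'L: "G' \<in> L" using G' maxG_L by blast
    have "\<not> le G' F"
    proof
      assume "le G' F"
      then have "ljoin L le F G = F" using join_absorb1[OF F GL] trans_le[OF GL G'L F G'(2)] by blast
      then show False using G \<open>K \<noteq> F\<close> by simp
    qed
    moreover have "le K (ljoin L le F G')" using G(2) join_mono[OF F GL G'L G'(2)] by simp
    ultimately show ?thesis using G' by blast
  qed
  show "K = K'" if "K \<in> contr_maxG" "K' \<in> contr_maxG" "le K K'" for K K'
    using that eq_if_join_maxG_le by blast
qed

lemma contr_maxG_decomp:
  assumes w: "w \<in> L" "le F w" "le w H"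
  shows "w = lub L le (insert F ((\<lambda>K. lmeet L le w K) ` contr_maxG))"
proof -
  let ?S = "insert F ((\<lambda>K. lmeet L le w K) ` contr_maxG)"
  have S: "?S \<subseteq> L" using F meet_closed[OF w(1)] contr_maxG_bounds by blast
  have lubS: "lub L le ?S \<in> L" "le F (lub L le ?S)" using lub_closed[OF S] lub_upper[OF S] by auto
  have "le (lub L le ?S) w"
  proof (rule lub_least[OF S w(1)])
    fix s assume "s \<in> ?S"
    then show "le s w" using w(2) meet_lower1[OF w(1)] contr_maxG_bounds by blast
  qed
  moreover have meets_le: "le (lmeet L le w G) (lub L le ?S)" if G: "G \<in> maxG H" for G
  proof -
    have GL: "G \<in> L" using G maxG_L by blast
    have wG: "lmeet L le w G \<in> L" "le (lmeet L le w G) w" "le (lmeet L le w G) G"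
      using meet_closed meet_lower1 meet_lower2 w(1) GL by auto
    show ?thesis
    proof (cases "le G F")
      case True
      then show ?thesis using trans_le[OF wG(1) GL F wG(3)] trans_le[OF wG(1) F lubS(1) _ lubS(2)]
        by blast
    next
      case False
      let ?K = "ljoin L le F G"
      have KL: "?K \<in> L" using join_closed[OF F GL] .
      have "le (lmeet L le w G) (lmeet L le w ?K)"
        using meet_greatest[OF w(1) KL wG(1,2)] trans_le[OF wG(1) GL KL wG(3) join_upper2[OF F GL]]
        by blast
      moreover have "lmeet L le w ?K \<in> ?S" using G False by blast
      ultimately show ?thesis
        using trans_le[OF wG(1) meet_closed[OF w(1) KL] lubS(1)] lub_upper[OF S] by blast
    qed
  qed
  have "(\<lambda>G. lmeet L le w G) ` maxG H \<subseteq> L" using meet_closed[OF w(1)] maxG_L by blast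
  then have "le (lub L le ((\<lambda>G. lmeet L le w G) ` maxG H)) (lub L le ?S)"
    using lub_least[OF _ lubS(1)] meets_le by blast
  then have "le w (lub L le ?S)" using lub_meet_maxG[OF H(1) w(1,3)] by simp
  ultimately show ?thesis using antisym_le[OF w(1) lubS(1)] by blast
qed

lemma family_meet_maxG_le:
  assumes y: "y \<in> (\<Pi>\<^sub>E K\<in>contr_maxG. interval L le F K)" and G0: "G0 \<in> maxG H" "\<not> le G0 F"
    and t: "t \<in> insert F (y ` contr_maxG)"
  shows "le (lmeet L le t G0) (y (ljoin L le F G0))"
proof -
  let ?K0 = "ljoin L le F G0"
  have G0L: "G0 \<in> L" using G0 maxG_L by blast
  have "?K0 \<in> contr_maxG" using G0 by blast
  then have y0: "y ?K0 \<in> L" "le F (y ?K0)" using y by (auto simp: interval_def)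
  have below_y0: "le u (y ?K0)" if "u \<in> L" "le u F" for u
    using trans_le[OF that(1) F y0(1) that(2) y0(2)] .
  show ?thesis
  proof (cases "t = F")
    case True
    then show ?thesis using below_y0 meet_closed[OF F G0L] meet_lower1[OF F G0L] by simp
  next
    case False
    then obtain K where "K \<in> contr_maxG" "t = y K" using t by blast
    then obtain G where G: "G \<in> maxG H" "\<not> le G F" "t = y (ljoin L le F G)" by blast
    let ?K = "ljoin L le F G"
    have K_M: "?K \<in> contr_maxG" using G(1,2) by blast
    then have "y ?K \<in> interval L le F ?K" by (rule PiE_mem[OF y])
    then have K: "?K \<in> L" "y ?K \<in> L" "le (y ?K) ?K"
      using contr_maxG_bounds[OF K_M] by (auto simp: interval_def)
    show ?thesis
    proof (cases "G = G0")
      case True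
      then show ?thesis using G(3) K(2) meet_lower1[OF _ G0L] by simp
    next
      case False
      have "le (lmeet L le (y ?K) G0) (lmeet L le ?K G0)" using meet_mono[OF K(2,1) G0L K(3)] .
      moreover have "le (lmeet L le ?K G0) F" using meet_join_maxG_le[OF H(1) F H(2) G(1) G0(1) False] .
      ultimately have "le (lmeet L le (y ?K) G0) F"
        using trans_le[OF meet_closed[OF K(2) G0L] meet_closed[OF K(1) G0L] F] by blast
      then show ?thesis using G(3) below_y0 meet_closed[OF K(2) G0L] by simp
    qed
  qed
qed

lemma below_join_maxG_le:
  assumes G0: "G0 \<in> maxG H" "\<not> le G0 F" and w: "w \<in> L" "le w (ljoin L le F G0)"
    and u: "u \<in> L" "le F u" "le (lmeet L le w G0) u"
  shows "le w u"
proof -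
  let ?K0 = "ljoin L le F G0"
  have K0: "?K0 \<in> L" "le ?K0 H" using contr_maxG_bounds G0 by blast+
  have wH: "le w H" using trans_le[OF w(1) K0(1) H(1) w(2) K0(2)] .
  have "le (lmeet L le w G) u" if G: "G \<in> maxG H" for G
  proof (cases "G = G0")
    case False
    have GL: "G \<in> L" using G maxG_L by blast
    have "le (lmeet L le w G) (lmeet L le ?K0 G)" using meet_mono[OF w(1) K0(1) GL w(2)] .
    moreover have "le (lmeet L le ?K0 G) F" using meet_join_maxG_le[OF H(1) F H(2) G0(1) G] False by simp
    ultimately show ?thesis
      using trans_le[OF meet_closed[OF w(1) GL] meet_closed[OF K0(1) GL] F] u(1,2)
        trans_le[OF meet_closed[OF w(1) GL] F u(1)] by blast
  qed (use u(3) in simp)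
  moreover have "(\<lambda>G. lmeet L le w G) ` maxG H \<subseteq> L" using meet_closed[OF w(1)] maxG_L by blast
  ultimately have "le (lub L le ((\<lambda>G. lmeet L le w G) ` maxG H)) u" using lub_least[OF _ u(1)] by blast
  then show ?thesis using lub_meet_maxG[OF H(1) w(1) wH] by simp
qed

lemma contr_maxG_component:
  assumes y: "y \<in> (\<Pi>\<^sub>E K\<in>contr_maxG. interval L le F K)" and K0: "K0 \<in> contr_maxG"
  shows "lmeet L le (lub L le (insert F (y ` contr_maxG))) K0 = y K0"
proof -
  let ?S = "insert F (y ` contr_maxG)"
  obtain G0 where G0: "G0 \<in> maxG H" "\<not> le G0 F" "K0 = ljoin L le F G0" using K0 by blast
  have G0L: "G0 \<in> L" using G0 maxG_L by blast
  have K0L: "K0 \<in> L" using contr_maxG_bounds[OF K0] by blast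
  have yK: "y K \<in> L" "le F (y K)" "le (y K) K" if "K \<in> contr_maxG" for K
  proof -
    have "y K \<in> interval L le F K" using PiE_mem[OF y that] .
    then show "y K \<in> L" "le F (y K)" "le (y K) K" by (simp_all add: interval_def)
  qed
  have S: "?S \<subseteq> L" unfolding insert_subset image_subset_iff using F yK(1) by blast
  have S_le_H: "le t H" if t: "t \<in> ?S" for t
  proof (cases "t = F")
    case False
    then obtain K where K: "K \<in> contr_maxG" "t = y K" using t by blast
    then show ?thesis
      using trans_le[OF yK(1)[OF K(1)] _ H(1) yK(3)[OF K(1)]] contr_maxG_bounds[OF K(1)] by blast
  qed (use H(2) in simp)
  let ?s = "lub L le ?S"
  have s: "?s \<in> L" "le ?s H" using lub_closed[OF S] lub_least[OF S H(1) S_le_H] by auto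
  have s_G0: "le (lmeet L le ?s G0) (y K0)"
  proof -
    have meets_le: "le u (y K0)" if "u \<in> (\<lambda>t. lmeet L le t G0) ` ?S" for u
      using family_meet_maxG_le[OF y G0(1,2)] G0(3) that by blast
    have "(\<lambda>t. lmeet L le t G0) ` ?S \<subseteq> L" using S meet_closed[OF _ G0L] by blast
    then have "le (lub L le ((\<lambda>t. lmeet L le t G0) ` ?S)) (y K0)"
      using lub_least[OF _ yK(1)[OF K0]] meets_le by blast
    then show ?thesis using meet_lub_distrib[OF H(1) S S_le_H G0(1)] by simp
  qed
  let ?w = "lmeet L le ?s K0"
  have w: "?w \<in> L" "le ?w ?s" "le ?w K0"
    using meet_closed meet_lower1 meet_lower2 s(1) K0L by auto
  have "le (lmeet L le ?w G0) (y K0)"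
    using trans_le[OF meet_closed[OF w(1) G0L] meet_closed[OF s(1) G0L] yK(1)[OF K0]
        meet_mono[OF w(1) s(1) G0L w(2)] s_G0] .
  then have "le ?w (y K0)" using below_join_maxG_le[OF G0(1,2) w(1)] w(3) G0(3) yK(1,2)[OF K0] by simp
  moreover have "le (y K0) ?w"
    using meet_greatest[OF s(1) K0L yK(1)[OF K0] lub_upper[OF S] yK(3)[OF K0]] K0 by blast
  ultimately show ?thesis using antisym_le[OF w(1) yK(1)[OF K0]] by blast
qed

lemma join_map_iso_contr: "join_map_iso (contr_L L le F) le contr_maxG H"
proof -
  let ?C = "contr_L L le F"
  interpret C: finite_lattice ?C le using finite_lattice_contr[OF F] .
  have M_C: "contr_maxG \<subseteq> ?C"
  proof
    fix K assume "K \<in> contr_maxG"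
    then show "K \<in> ?C" using contr_maxG_bounds[of K] by (simp add: contr_L_def)
  qed
  have H_C: "H \<in> ?C" using H by (simp add: contr_L_def)
  show ?thesis
  proof (rule C.join_map_isoI[OF M_C H_C])
    show "\<And>K. K \<in> contr_maxG \<Longrightarrow> le K H" using contr_maxG_bounds by blast
  next
    fix w assume w: "w \<in> ?C" "le w H"
    have meets: "lmeet ?C le w K = lmeet L le w K" if "K \<in> contr_maxG" for K
      using meet_contr[OF F w(1)] M_C that by blast
    have img_eq: "(\<lambda>K. lmeet ?C le w K) ` contr_maxG = (\<lambda>K. lmeet L le w K) ` contr_maxG"
      by (rule image_cong[OF refl]) (rule meets)
    have "(\<lambda>K. lmeet L le w K) ` contr_maxG \<subseteq> ?C"
      using join_meet_contr_L[OF F w(1)] M_C by blast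
    then have "lub ?C le ((\<lambda>K. lmeet ?C le w K) ` contr_maxG) =
        lub L le (insert F ((\<lambda>K. lmeet L le w K) ` contr_maxG))"
      unfolding img_eq by (rule lub_contr[OF F])
    moreover have "w \<in> L" "le F w" using w(1) by (simp_all add: contr_L_def)
    ultimately show "w = lub ?C le ((\<lambda>K. lmeet ?C le w K) ` contr_maxG)"
      using contr_maxG_decomp w(2) by simp
  next
    fix y K assume y: "y \<in> (\<Pi>\<^sub>E K\<in>contr_maxG. interval ?C le C.bottom K)"
      and K: "K \<in> contr_maxG"
    from y have y': "y \<in> (\<Pi>\<^sub>E K\<in>contr_maxG. interval L le F K)"
      unfolding bot_contr[OF F] interval_contr .
    have y_C: "y ` contr_maxG \<subseteq> ?C" using family_contr_sub[OF y'] .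
    have "lub ?C le (y ` contr_maxG) \<in> ?C" using C.lub_closed[OF y_C] .
    then have "lmeet ?C le (lub ?C le (y ` contr_maxG)) K = lmeet L le (lub ?C le (y ` contr_maxG)) K"
      using meet_contr[OF F] M_C K by blast
    also have "\<dots> = y K" using lub_contr[OF F y_C] contr_maxG_component[OF y' K] by simp
    finally show "lmeet ?C le (lub ?C le (y ` contr_maxG)) K = y K" .
  qed
qed

end

lemma building_set_contr:
  assumes F: "F \<in> L"
  shows "building_set (contr_L L le F) le (contr_G L le \<G> F)"
  unfolding building_set_iff_join_map_iso bot_contr[OF F]
proof (intro conjI ballI impI)
  show "contr_G L le \<G> F \<subseteq> contr_L L le F - {F}"
    using G_sub join_closed[OF F] join_upper1[OF F] by (auto simp: contr_G_def contr_L_def)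
  fix H assume "H \<in> contr_L L le F" "H \<noteq> F"
  then have H: "H \<in> L" "le F H" "H \<noteq> F" by (auto simp: contr_L_def)
  show "join_map_iso (contr_L L le F) le (maxs le {K \<in> contr_G L le \<G> F. le K H}) H"
    unfolding maxs_contr_G[OF F H] using join_map_iso_contr[OF F H] .
qed

end

section \<open>Flagness of the contraction\<close>

text \<open>The assumptions are what \<open>minimal_non_nested\<close> yields for a minimal non-face \<open>N\<close> of the
  contraction with \<open>|N| \<ge> 3\<close>. \<open>rep K\<close> and \<open>G0\<close> are the \<open>G\<^sub>K\<close> and \<open>G\<^sub>0\<close> of the proof idea,
  and \<open>T0\<close> is the antichain witnessing that \<open>(L, \<G>)\<close> is not flag.\<close>

locale contr_nonface = building +
  fixes F :: 'a and N :: "'a set"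
  assumes F: "F \<in> L"
    and N_sub: "N \<subseteq> contr_G L le \<G> F"
    and N_antichain: "antichain_on le N"
    and N_card: "3 \<le> card N"
    and lub_N: "lub (contr_L L le F) le N \<in> contr_G L le \<G> F"
    and lub_pair: "\<And>K K'. K \<in> N \<Longrightarrow> K' \<in> N \<Longrightarrow> K \<noteq> K' \<Longrightarrow>
      lub (contr_L L le F) le {K, K'} \<notin> contr_G L le \<G> F"
begin

definition rep :: "'a \<Rightarrow> 'a" where
  "rep K = (SOME G. G \<in> maxG K \<and> ljoin L le F G = K \<and> \<not> le G F)"

lemma rep:
  assumes "K \<in> contr_G L le \<G> F"
  shows "rep K \<in> maxG K" "ljoin L le F (rep K) = K" "\<not> le (rep K) F"
  using someI_ex[OF ex_maxG_join_eq[OF F assms]] unfolding rep_def by blast+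

lemma rep_closed: "K \<in> contr_G L le \<G> F \<Longrightarrow> rep K \<in> \<G> \<and> rep K \<in> L \<and> le (rep K) K"
  using rep(1) maxG_sub maxG_L maxG_le by blast

lemma N_L: "N \<subseteq> L" using N_sub contr_G_sub[OF F] by blast

lemma N_ge_F: "K \<in> N \<Longrightarrow> le F K \<and> K \<noteq> F"
  using N_sub join_upper1[OF F] G_sub by (auto simp: contr_G_def)

definition N_sup :: 'a where
  "N_sup = lub L le (insert F N)"

lemma N_sup_contr_G: "N_sup \<in> contr_G L le \<G> F"
proof -
  have "N \<subseteq> contr_L L le F" using N_L N_ge_F by (auto simp: contr_L_def)
  then show ?thesis using lub_N lub_contr[OF F] unfolding N_sup_def by simp
qed

lemma N_sup: "N_sup \<in> L" "le F N_sup" "K \<in> N \<Longrightarrow> le K N_sup"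
proof -
  have S: "insert F N \<subseteq> L" using F N_L by blast
  show "N_sup \<in> L" "le F N_sup" "K \<in> N \<Longrightarrow> le K N_sup"
    unfolding N_sup_def using lub_closed[OF S] lub_upper[OF S] by auto
qed

lemma N_sup_eq_lub_rep: "N_sup = lub L le (insert F (rep ` N))"
proof -
  have S: "insert F (rep ` N) \<subseteq> L" using F rep_closed N_sub by blast
  have "is_lub L le (insert F (rep ` N)) N_sup"
    unfolding is_lub_def
  proof (intro conjI ballI impI)
    show "N_sup \<in> L" by (rule N_sup(1))
    fix s assume "s \<in> insert F (rep ` N)"
    then show "le s N_sup"
    proof
      assume "s \<in> rep ` N"
      then obtain K where K: "K \<in> N" "s = rep K" by blast
      then show ?thesis
        using trans_le[OF _ _ N_sup(1) _ N_sup(3)[OF K(1)]] rep_closed N_sub N_L by blast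
    qed (simp add: N_sup(2))
  next
    fix w assume w: "w \<in> L" "\<forall>s\<in>insert F (rep ` N). le s w"
    have "le K w" if K: "K \<in> N" for K
    proof -
      have K_G: "K \<in> contr_G L le \<G> F" using N_sub K by blast
      have "le (rep K) w" using w(2) K by blast
      then have "le (ljoin L le F (rep K)) w"
        using join_least[OF F _ w(1)] rep_closed[OF K_G] w(2) by blast
      then show ?thesis using rep(2)[OF K_G] by simp
    qed
    then show "le N_sup w" unfolding N_sup_def using lub_least[OF _ w(1)] F N_L w(2) by blast
  qed
  then show ?thesis using lub_eqI[OF subset_refl] by simp
qed

abbreviation G0 :: 'a where
  "G0 \<equiv> rep N_sup"

lemma G0: "G0 \<in> maxG N_sup" "ljoin L le F G0 = N_sup" "\<not> le G0 F" "G0 \<in> \<G>" "G0 \<in> L" "le G0 N_sup"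
  using rep[OF N_sup_contr_G] rep_closed[OF N_sup_contr_G] by auto

lemma ex_other_in_N:
  assumes "K \<in> N"
  shows "\<exists>K'\<in>N. K' \<noteq> K"
proof -
  have "card (N - {K}) \<noteq> 0" using card_Diff_singleton[OF assms] N_card by simp
  then have "N - {K} \<noteq> {}" by (metis card.empty)
  then show ?thesis by blast
qed

lemma rep_less_G0:
  assumes K: "K \<in> N"
  shows "le (rep K) G0" "rep K \<noteq> G0"
proof -
  have r: "rep K \<in> \<G>" "rep K \<in> L" "le (rep K) K" "\<not> le (rep K) F"
    using rep_closed rep(3) N_sub K by auto
  have "le (rep K) N_sup" using trans_le[OF r(2) _ N_sup(1) r(3) N_sup(3)[OF K]] N_L K by blast
  then obtain G where G: "G \<in> maxG N_sup" "le (rep K) G" using ex_maxG_above r(1) by blast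
  have GL: "G \<in> L" using G maxG_L by blast
  have "G = G0"
  proof (rule ccontr)
    assume "G \<noteq> G0"
    then have "le (lmeet L le N_sup G) F"
      using meet_join_maxG_le[OF N_sup(1) F N_sup(2) G0(1) G(1)] G0(2) by simp
    then have "le G F" using meet_absorb2[OF N_sup(1) GL maxG_le[OF G(1)]] by simp
    then show False using trans_le[OF r(2) GL F G(2)] r(4) by blast
  qed
  then show "le (rep K) G0" using G by simp
  show "rep K \<noteq> G0"
  proof
    assume "rep K = G0"
    then have "K = N_sup" using rep(2) N_sub K G0(2) by force
    obtain K' where "K' \<in> N" "K' \<noteq> K" using ex_other_in_N[OF K] by blast
    then show False using N_sup(3) \<open>K = N_sup\<close> N_antichain K unfolding antichain_on_def by blast
  qed
qed

definition F0 :: 'a where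
  "F0 = lmeet L le F G0"

definition T0 :: "'a set" where
  "T0 = rep ` N \<union> {b \<in> maxG F0. \<forall>K\<in>N. \<not> le b (rep K)}"

lemma F0: "F0 \<in> L" "le F0 F" "le F0 G0"
  unfolding F0_def using meet_closed meet_lower1 meet_lower2 F G0(5) by auto

lemma maxG_F0:
  assumes b: "b \<in> maxG F0"
  shows "b \<in> \<G>" "b \<in> L" "le b F" "le b G0" "b \<noteq> G0"
proof -
  show bG: "b \<in> \<G>" "b \<in> L" using b maxG_sub maxG_L by auto
  have "le b F0" using maxG_le[OF b] .
  then show bF: "le b F" "le b G0" using trans_le[OF bG(2) F0(1)] F0 F G0(5) by auto
  show "b \<noteq> G0" using bF(1) G0(3) by blast
qed

lemma rep_N: "K \<in> N \<Longrightarrow> rep K \<in> \<G> \<and> rep K \<in> L \<and> le (rep K) K \<and> \<not> le (rep K) F \<and> ljoin L le F (rep K) = K"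
  using rep rep_closed N_sub by blast

lemma T0_cases:
  assumes "t \<in> T0"
  obtains K where "K \<in> N" "t = rep K"
    | "t \<in> maxG F0" "\<And>K. K \<in> N \<Longrightarrow> \<not> le t (rep K)"
  using assms unfolding T0_def by blast

lemma T0_less_G0: "t \<in> T0 \<Longrightarrow> t \<in> \<G> \<and> t \<in> L \<and> le t G0 \<and> t \<noteq> G0"
  by (erule T0_cases) (use rep_N rep_less_G0 maxG_F0 in auto)

lemma T0_vertices: "T0 \<subseteq> \<G> - maxs le \<G>"
  using T0_less_G0 G0(4) unfolding maxs_def by blast

lemma T0_finite: "finite T0"
  using T0_less_G0 finite_subset[OF _ finite_L] by blast

lemma T0_card: "2 \<le> card T0"
proof -
  have "inj_on rep N" using rep_N by (metis inj_onI)
  then have "card (rep ` N) = card N" by (rule card_image)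
  moreover have "card (rep ` N) \<le> card T0" using card_mono[OF T0_finite] unfolding T0_def by blast
  ultimately show ?thesis using N_card by simp
qed

lemma T0_antichain: "antichain_on le T0"
  unfolding antichain_on_def
proof (intro ballI impI)
  fix t t' assume t: "t \<in> T0" and t': "t' \<in> T0" and le_tt': "le t t'"
  show "t = t'"
  proof (cases rule: T0_cases[OF t])
    case (1 K)
    show ?thesis
    proof (cases rule: T0_cases[OF t'])
      case (1 K')
      have "le K K'"
        using join_mono[OF F _ _ le_tt'] rep_N \<open>K \<in> N\<close> \<open>K' \<in> N\<close> \<open>t = rep K\<close> \<open>t' = rep K'\<close>
        by metis
      then show ?thesis
        using N_antichain \<open>K \<in> N\<close> \<open>K' \<in> N\<close> \<open>t = rep K\<close> \<open>t' = rep K'\<close>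
        unfolding antichain_on_def by blast
    next
      case 2
      have "le t F" using trans_le[OF _ _ F le_tt'] maxG_F0[OF 2(1)] rep_N 1 by blast
      then show ?thesis using rep_N 1 by blast
    qed
  next
    case 2
    note t_F0 = this
    show ?thesis
    proof (cases rule: T0_cases[OF t'])
      case (1 K')
      then show ?thesis using t_F0(2) le_tt' by blast
    next
      case 2
      show ?thesis
        using maxG_maximal[OF t_F0(1) maxG_F0(1)[OF 2(1)] le_tt' maxG_le[OF 2(1)]] by simp
    qed
  qed
qed

lemma F0_le_upper_bound:
  assumes z: "z \<in> L" "\<And>t. t \<in> T0 \<Longrightarrow> le t z"
  shows "le F0 z"
proof -
  have "le b z" if b: "b \<in> maxG F0" for b
  proof (cases "\<forall>K\<in>N. \<not> le b (rep K)")
    case True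
    then have "b \<in> T0" unfolding T0_def using b by blast
    then show ?thesis using z(2) by blast
  next
    case False
    then obtain K where K: "K \<in> N" "le b (rep K)" by blast
    have "rep K \<in> T0" unfolding T0_def using K(1) by blast
    then show ?thesis
      using trans_le[OF maxG_F0(2)[OF b] _ z(1) K(2) z(2)] rep_N[OF K(1)] by blast
  qed
  then have "le (lub L le (maxG F0)) z" using lub_least[OF maxG_L z(1)] by blast
  then show ?thesis using lub_maxG[OF F0(1)] by simp
qed

lemma lub_T0: "lub L le T0 = G0"
proof (rule lub_eqI[OF subset_refl], unfold is_lub_def, intro conjI ballI impI)
  show "G0 \<in> L" by (rule G0(5))
  show "le t G0" if "t \<in> T0" for t using T0_less_G0[OF that] by blast
  fix z assume z: "z \<in> L" "\<forall>t\<in>T0. le t z"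
  let ?S = "insert F (rep ` N)"
  have S: "?S \<subseteq> L" using F rep_N by blast
  have S_le_X: "le s N_sup" if "s \<in> ?S" for s
    by (subst N_sup_eq_lub_rep) (rule lub_upper[OF S that])
  have "le (lmeet L le s G0) z" if s: "s \<in> ?S" for s
  proof (cases "s = F")
    case True
    then show ?thesis using F0_le_upper_bound z unfolding F0_def by blast
  next
    case False
    then obtain K where K: "K \<in> N" "s = rep K" using s by blast
    have rK: "rep K \<in> L" "le (rep K) z" using rep_N[OF K(1)] z(2) K(1) unfolding T0_def by blast+
    show ?thesis
      using trans_le[OF meet_closed[OF rK(1) G0(5)] rK(1) z(1) meet_lower1[OF rK(1) G0(5)] rK(2)] K(2)
      by simp
  qed
  moreover have "(\<lambda>s. lmeet L le s G0) ` ?S \<subseteq> L" using S meet_closed[OF _ G0(5)] by blast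
  ultimately have "le (lub L le ((\<lambda>s. lmeet L le s G0) ` ?S)) z"
    using lub_least[OF _ z(1)] by blast
  moreover have "lmeet L le N_sup G0 = G0" using meet_absorb2[OF N_sup(1) G0(5,6)] .
  ultimately show "le G0 z"
    using meet_lub_distrib[OF N_sup(1) S S_le_X G0(1)] N_sup_eq_lub_rep by simp
qed

lemma T0_not_nested: "\<not> nested L le \<G> T0"
proof
  assume "nested L le \<G> T0"
  then have "\<forall>A\<subseteq>T0. antichain_on le A \<longrightarrow> (\<forall>T\<subseteq>A. finite T \<and> 2 \<le> card T \<longrightarrow> lub L le T \<notin> \<G>)"
    unfolding nested_def by blast
  then have "lub L le T0 \<notin> \<G>" using T0_antichain T0_finite T0_card by blast
  then show False using lub_T0 G0(4) by simp
qed

lemma lub_contr_pair: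
  assumes K: "K \<in> N" "K' \<in> N"
  shows "lub (contr_L L le F) le {K, K'} = ljoin L le F (lub L le {rep K, rep K'})"
proof -
  let ?W = "lub L le {rep K, rep K'}"
  have r: "rep K \<in> L" "rep K' \<in> L" "ljoin L le F (rep K) = K" "ljoin L le F (rep K') = K'"
    using rep_N K by auto
  have S: "{rep K, rep K'} \<subseteq> L" using r by blast
  have WL: "?W \<in> L" using lub_closed[OF S] .
  have "{K, K'} \<subseteq> contr_L L le F" using K N_L N_ge_F by (auto simp: contr_L_def)
  then have "lub (contr_L L le F) le {K, K'} = lub L le {F, K, K'}" using lub_contr[OF F] by simp
  also have "\<dots> = ljoin L le F ?W"
  proof (rule lub_eqI[OF subset_refl], unfold is_lub_def, intro conjI ballI impI)
    show "ljoin L le F ?W \<in> L" using join_closed[OF F WL] .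
    have "le K (ljoin L le F ?W)" "le K' (ljoin L le F ?W)"
      using join_mono[OF F r(1) WL lub_upper[OF S, of "rep K"]]
        join_mono[OF F r(2) WL lub_upper[OF S, of "rep K'"]] r(3,4) by simp_all
    then show "le s (ljoin L le F ?W)" if "s \<in> {F, K, K'}" for s
      using that join_upper1[OF F WL] by blast
    fix w assume w: "w \<in> L" "\<forall>s\<in>{F, K, K'}. le s w"
    have "le (rep K) w" "le (rep K') w"
      using trans_le[OF r(1) _ w(1)] trans_le[OF r(2) _ w(1)] rep_N K w(2) N_L by blast+
    then have "le ?W w" using lub_least[OF S w(1)] by blast
    then show "le (ljoin L le F ?W) w" using join_least[OF F WL w(1)] w(2) by blast
  qed
  finally show ?thesis .
qed

lemma lub_rep_pair_notin:
  assumes K: "K \<in> N" "K' \<in> N" "K \<noteq> K'"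
  shows "lub L le {rep K, rep K'} \<notin> \<G>"
proof
  let ?J = "ljoin L le F (lub L le {rep K, rep K'})"
  assume W: "lub L le {rep K, rep K'} \<in> \<G>"
  have S: "{rep K, rep K'} \<subseteq> L" using rep_N K by blast
  have "le K ?J"
    using join_mono[OF F _ lub_closed[OF S] lub_upper[OF S, of "rep K"]] rep_N[OF K(1)] by simp
  moreover have "K \<in> L" using K(1) N_L by blast
  ultimately have "?J \<noteq> F" using antisym_le[OF _ F] N_ge_F[OF K(1)] by auto
  then have "?J \<in> contr_G L le \<G> F" using W unfolding contr_G_def by blast
  then show False using lub_pair[OF K] lub_contr_pair[OF K(1,2)] by simp
qed

lemma lub_rep_maxG_F0_notin:
  assumes K: "K \<in> N" and b: "b \<in> maxG F0" "\<not> le b (rep K)"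
  shows "lub L le {rep K, b} \<notin> \<G>"
proof
  let ?W = "lub L le {rep K, b}"
  assume W: "?W \<in> \<G>"
  have S: "{rep K, b} \<subseteq> L" using rep_N K maxG_F0(2)[OF b(1)] by blast
  have "le b K" using trans_le[OF maxG_F0(2)[OF b(1)] F _ maxG_F0(3)[OF b(1)]] N_ge_F K N_L by blast
  then have "le ?W K" using lub_least[OF S] rep_N K N_L by blast
  then have "?W = rep K" using maxG_maximal[OF rep(1) W] lub_upper[OF S] N_sub K by blast
  then show False using lub_upper[OF S, of b] b(2) by simp
qed

lemma lub_maxG_F0_pair_notin:
  assumes b: "b \<in> maxG F0" "b' \<in> maxG F0" "b \<noteq> b'"
  shows "lub L le {b, b'} \<notin> \<G>"
proof
  let ?W = "lub L le {b, b'}"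
  assume W: "?W \<in> \<G>"
  have S: "{b, b'} \<subseteq> L" using maxG_F0(2) b by blast
  have "le ?W F0" using lub_least[OF S F0(1)] maxG_le b by blast
  then have "?W = b" "?W = b'" using maxG_maximal[OF _ W] lub_upper[OF S] b by blast+
  then show False using b(3) by simp
qed

lemma not_flag_built: "\<not> flag_built L le \<G>"
proof
  assume "flag_built L le \<G>"
  then obtain u v where uv: "u \<in> T0" "v \<in> T0" "u \<noteq> v" "lub L le {u, v} \<in> \<G>"
    using flag_built_non_nested_pair T0_vertices T0_finite T0_not_nested by blast
  show False
  proof (cases rule: T0_cases[OF uv(1)])
    case (1 K)
    then show False
    proof (cases rule: T0_cases[OF uv(2)])
      case (1 K')
      then show False using lub_rep_pair_notin uv \<open>K \<in> N\<close> \<open>u = rep K\<close> by blast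
    next
      case 2
      then show False using lub_rep_maxG_F0_notin uv \<open>K \<in> N\<close> \<open>u = rep K\<close> by blast
    qed
  next
    case 2
    note u_F0 = this
    show False
    proof (cases rule: T0_cases[OF uv(2)])
      case (1 K')
      then show False using lub_rep_maxG_F0_notin[of K' u] u_F0 uv by (simp add: insert_commute)
    next
      case 2
      then show False using lub_maxG_F0_pair_notin u_F0 uv by blast
    qed
  qed
qed

end

context building
begin

lemma flag_built_contr:
  assumes F: "F \<in> L" and flag: "flag_built L le \<G>"
  shows "flag_built (contr_L L le F) le (contr_G L le \<G> F)"
  unfolding flag_built_def
proof (intro allI impI)
  let ?C = "contr_L L le F" and ?GF = "contr_G L le \<G> F"
  fix N assume N: "N \<subseteq> ?GF - maxs le ?GF \<and> N \<notin> nested_complex ?C le ?GF \<and>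
      (\<forall>N'. N' \<subset> N \<longrightarrow> N' \<in> nested_complex ?C le ?GF)"
  have N_GF: "N \<subseteq> ?GF" using N by blast
  have "\<not> nested ?C le ?GF N" using N by (simp add: nested_complex_def)
  moreover have "nested ?C le ?GF N'" if "N' \<subset> N" for N'
    using N that by (simp add: nested_complex_def)
  ultimately have min: "antichain_on le N" "finite N" "2 \<le> card N" "lub ?C le N \<in> ?GF"
    "\<forall>T\<subset>N. 2 \<le> card T \<longrightarrow> lub ?C le T \<notin> ?GF"
    using minimal_non_nested[OF N_GF] by blast+
  show "card N = 2"
  proof (rule ccontr)
    assume "card N \<noteq> 2"
    then have card3: "3 \<le> card N" using min(3) by simp
    have "lub ?C le {K, K'} \<notin> ?GF" if "K \<in> N" "K' \<in> N" "K \<noteq> K'" for K K'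
    proof -
      have "card {K, K'} = 2" using that(3) by simp
      then have "{K, K'} \<subset> N" using card3 that(1,2) by auto
      then show ?thesis using min(5) \<open>card {K, K'} = 2\<close> by simp
    qed
    then interpret contr_nonface L le \<G> F N
      by unfold_locales (use F N_GF min(1,4) card3 in auto)
    show False using not_flag_built flag by blast
  qed
qed

end

theorem proposition3p17:
  fixes L :: "'a set" and le :: "'a \<Rightarrow> 'a \<Rightarrow> bool" and \<G> :: "'a set" and F :: 'a
  assumes "built_lattice L le \<G>"
    and "flag_built L le \<G>"
    and "F \<in> L" and "F \<noteq> lbot L le" and "F \<noteq> ltop L le"
  shows "built_lattice (restr_L L le F) le (restr_G \<G> le F) \<and>
         flag_built (restr_L L le F) le (restr_G \<G> le F) \<and>
         built_lattice (contr_L L le F) le (contr_G L le \<G> F) \<and>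
         flag_built (contr_L L le F) le (contr_G L le \<G> F)"
proof -
  have geometric: "geometric_lattice L le" and building: "building_set L le \<G>"
    using assms(1) unfolding built_lattice_def by auto
  interpret finite_geometric_lattice L le
    using geometric by unfold_locales (auto simp: geometric_lattice_def)
  interpret building L le \<G>
    using building by unfold_locales
  show ?thesis
    unfolding built_lattice_def
    using geometric_lattice_restr building_set_restr flag_built_restr
      geometric_lattice_contr building_set_contr flag_built_contr assms(2,3) by blast
qed

end
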